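(* Let $X$ be a Hausdorff locally compact space and $\sigma\colon\mathrm{Dom}(\sigma)\to\mathrm{Ran}(\sigma)$ a local homeomorphism between open subsets of $X$, with Deaconu–Renault groupoid $\mathcal{G}_\sigma$. For $Y\subset X\times\mathbb{T}$ put $Y_x=\{z\in\mathbb{T}:(x,z)\in Y\}$. Then $Y$ equals $q^{-1}(C)$ for some $\mathcal{G}_\sigma$-invariant closed subset $C\subset\mathrm{Stab}(\mathcal{G}_\sigma)^\wedge$ if and only if: (i) $Y$ is closed in $X\times\mathbb{T}$ (product topology); (ii) $Y_x=Y_{\sigma(x)}$ for all $x\in\mathrm{Dom}(\sigma)$; (iii) if $Y_{x_0}\ne\emptyset,\mathbb{T}$, then $x_0$ is periodic, $e^{2\pi i/p(x_0)}Y_{x_0}=Y_{x_0}$, and there is a neighbourhood $V$ of $x_0$ such that $Y_x=\emptyset$ for all $x\in V$ with $l(x)\ne l(x_0)$.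
   Context: Set $\sigma^0=\mathrm{id}_X$, and for $n\ge1$ let $\sigma^n$ be the $n$-fold composition with its natural domain $\mathrm{Dom}(\sigma^n)$. $\mathcal{G}_\sigma=\{(x,m-n,y): m,n\ge0,\ x\in\mathrm{Dom}(\sigma^m),\ y\in\mathrm{Dom}(\sigma^n),\ \sigma^m(x)=\sigma^n(y)\}$ with $r(x,p,y)=x$, $s(x,p,y)=y$, $(x,p,y)(y,q,w)=(x,p+q,w)$, unit space identified with $X$, and topology with basis $Z(U,m,n,V)=\{(x,m-n,y): x\in U\cap\mathrm{Dom}(\sigma^m),\ y\in V\cap\mathrm{Dom}(\sigma^n),\ \sigma^m(x)=\sigma^n(y)\}$ ($U,V$ open); it is a Hausdorff locally compact étale groupoid with abelian isotropy $(\mathcal{G}_\sigma)^x_x=\{(x,l,x)\}$ and grading $\Phi(x,l,y)=l$. $\mathrm{Stab}(\mathcal{G}_\sigma)^\wedge$ is the set of pairs $(x,\chi)$, $\chi$ a character of $(\mathcal{G}_\sigma)^x_x$, with topology having as basis finite intersections of $\mathcal{O}(U,K,V)=\{(x,\chi): x\in U,\ \chi(K\cap(\mathcal{G}_\sigma)^x_x)\subset V\}$ ($U\subset X$ open, $K$ compact in the isotropy bundle, $V\subset\mathbb{T}$ open); $\mathcal{G}_\sigma$ acts by $g(x,\chi)=(r(g),\chi(g^{-1}\cdot g))$ for $s(g)=x$. The map $q\colon X\times\mathbb{T}\to\mathrm{Stab}(\mathcal{G}_\sigma)^\wedge$ is $q(x,z)=(x,\ (x,l,x)\mapsto z^l)$.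 A point $x$ is periodic if $\sigma^{n+p}(x)=\sigma^n(x)$ for some $p\ge1$, $n\ge0$; then $p(x)$ is the smallest such $p$ and $l(x)$ is the smallest $l\ge0$ with $\sigma^{p(x)+l}(x)=\sigma^l(x)$; for non-periodic $x$, $p(x)=l(x)=\infty$. *)

theory Defs
  imports "HOL-Analysis.Analysis" "HOL-Library.Extended_Nat"
begin

text \<open>Deaconu--Renault groupoid of a local homeomorphism \<open>\<sigma>\<close> with domain \<open>D\<close>
  on the space \<open>X = UNIV :: 'a\<close>.\<close>

definition local_homeo :: "'a::topological_space set \<Rightarrow> ('a \<Rightarrow> 'a) \<Rightarrow> bool" where
  "local_homeo D \<sigma> \<longleftrightarrow> (\<forall>x\<in>D. \<exists>U. open U \<and> x \<in> U \<and> U \<subseteq> D \<and> open (\<sigma> ` U) \<and>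
      (\<exists>g. homeomorphism U (\<sigma> ` U) \<sigma> g))"

definition dom_iter :: "'a set \<Rightarrow> ('a \<Rightarrow> 'a) \<Rightarrow> nat \<Rightarrow> 'a set" where
  "dom_iter D \<sigma> n = {x. \<forall>i<n. (\<sigma> ^^ i) x \<in> D}"

type_synonym 'a gel = "'a \<times> int \<times> 'a"

definition DRG :: "'a set \<Rightarrow> ('a \<Rightarrow> 'a) \<Rightarrow> 'a gel set" where
  "DRG D \<sigma> = {(x, int m - int n, y) | x m n y. x \<in> dom_iter D \<sigma> m \<and> y \<in> dom_iter D \<sigma> n
      \<and> (\<sigma> ^^ m) x = (\<sigma> ^^ n) y}"

definition gr :: "'a gel \<Rightarrow> 'a" where "gr g = fst g"
definition gs :: "'a gel \<Rightarrow> 'a" where "gs g = snd (snd g)"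
definition gmul :: "'a gel \<Rightarrow> 'a gel \<Rightarrow> 'a gel" where
  "gmul g h = (fst g, fst (snd g) + fst (snd h), snd (snd h))"
definition ginv :: "'a gel \<Rightarrow> 'a gel" where
  "ginv g = (snd (snd g), - fst (snd g), fst g)"

definition Zset :: "'a set \<Rightarrow> ('a \<Rightarrow> 'a) \<Rightarrow> 'a set \<Rightarrow> nat \<Rightarrow> nat \<Rightarrow> 'a set \<Rightarrow> 'a gel set" where
  "Zset D \<sigma> U m n V = {(x, int m - int n, y) | x y. x \<in> U \<inter> dom_iter D \<sigma> m \<and>
      y \<in> V \<inter> dom_iter D \<sigma> n \<and> (\<sigma> ^^ m) x = (\<sigma> ^^ n) y}"

definition DRG_top :: "'a::topological_space set \<Rightarrow> ('a \<Rightarrow> 'a) \<Rightarrow> 'a gel topology" where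
  "DRG_top D \<sigma> = topology_generated_by {Zset D \<sigma> U m n V | U m n V. open U \<and> open V}"

definition iso_at :: "'a set \<Rightarrow> ('a \<Rightarrow> 'a) \<Rightarrow> 'a \<Rightarrow> 'a gel set" where
  "iso_at D \<sigma> x = {g \<in> DRG D \<sigma>. gr g = x \<and> gs g = x}"

definition iso_bundle :: "'a set \<Rightarrow> ('a \<Rightarrow> 'a) \<Rightarrow> 'a gel set" where
  "iso_bundle D \<sigma> = {g \<in> DRG D \<sigma>. gr g = gs g}"

abbreviation circle :: "complex set" where "circle \<equiv> sphere 0 1"

text \<open>A character of the isotropy group at \<open>x\<close>, represented as a function on groupoid
  elements that vanishes outside the isotropy group (so that it is determined uniquely).\<close>
definition is_char :: "'a set \<Rightarrow> ('a \<Rightarrow> 'a) \<Rightarrow> 'a \<Rightarrow> ('a gel \<Rightarrow> complex) \<Rightarrow> bool" where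
  "is_char D \<sigma> x ch \<longleftrightarrow> (\<forall>h\<in>iso_at D \<sigma> x. ch h \<in> circle) \<and>
     (\<forall>h1\<in>iso_at D \<sigma> x. \<forall>h2\<in>iso_at D \<sigma> x. ch (gmul h1 h2) = ch h1 * ch h2) \<and>
     (\<forall>h. h \<notin> iso_at D \<sigma> x \<longrightarrow> ch h = 0)"

definition Stab_dual :: "'a set \<Rightarrow> ('a \<Rightarrow> 'a) \<Rightarrow> ('a \<times> ('a gel \<Rightarrow> complex)) set" where
  "Stab_dual D \<sigma> = {(x, ch). is_char D \<sigma> x ch}"

definition Oset :: "'a set \<Rightarrow> ('a \<Rightarrow> 'a) \<Rightarrow> 'a set \<Rightarrow> 'a gel set \<Rightarrow> complex set
     \<Rightarrow> ('a \<times> ('a gel \<Rightarrow> complex)) set" where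
  "Oset D \<sigma> U K V = {(x, ch) \<in> Stab_dual D \<sigma>. x \<in> U \<and> ch ` (K \<inter> iso_at D \<sigma> x) \<subseteq> V}"

definition Stab_top :: "'a::topological_space set \<Rightarrow> ('a \<Rightarrow> 'a)
     \<Rightarrow> ('a \<times> ('a gel \<Rightarrow> complex)) topology" where
  "Stab_top D \<sigma> = topology_generated_by
     {Oset D \<sigma> U K V | U K V. open U \<and> compactin (subtopology (DRG_top D \<sigma>) (iso_bundle D \<sigma>)) K
        \<and> openin (top_of_set circle) V}"

definition act :: "'a set \<Rightarrow> ('a \<Rightarrow> 'a) \<Rightarrow> 'a gel \<Rightarrow> ('a \<times> ('a gel \<Rightarrow> complex))
     \<Rightarrow> ('a \<times> ('a gel \<Rightarrow> complex))" where
  "act D \<sigma> g p = (gr g, \<lambda>h. if h \<in> iso_at D \<sigma> (gr g) then snd p (gmul (gmul (ginv g) h) g) else 0)"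

definition invariant :: "'a set \<Rightarrow> ('a \<Rightarrow> 'a) \<Rightarrow> ('a \<times> ('a gel \<Rightarrow> complex)) set \<Rightarrow> bool" where
  "invariant D \<sigma> C \<longleftrightarrow> (\<forall>g\<in>DRG D \<sigma>. \<forall>ch. (gs g, ch) \<in> C \<longrightarrow> act D \<sigma> g (gs g, ch) \<in> C)"

definition qmap :: "'a set \<Rightarrow> ('a \<Rightarrow> 'a) \<Rightarrow> 'a \<Rightarrow> complex \<Rightarrow> ('a \<times> ('a gel \<Rightarrow> complex))" where
  "qmap D \<sigma> x z = (x, \<lambda>h. if h \<in> iso_at D \<sigma> x then z powi (fst (snd h)) else 0)"

definition fiber :: "('a \<times> complex) set \<Rightarrow> 'a \<Rightarrow> complex set" where
  "fiber Y x = {z \<in> circle. (x, z) \<in> Y}"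

definition periodic_pt :: "'a set \<Rightarrow> ('a \<Rightarrow> 'a) \<Rightarrow> 'a \<Rightarrow> bool" where
  "periodic_pt D \<sigma> x \<longleftrightarrow> (\<exists>p n. p \<ge> 1 \<and> x \<in> dom_iter D \<sigma> (n + p) \<and> (\<sigma> ^^ (n + p)) x = (\<sigma> ^^ n) x)"

definition per_p :: "'a set \<Rightarrow> ('a \<Rightarrow> 'a) \<Rightarrow> 'a \<Rightarrow> enat" where
  "per_p D \<sigma> x = (if periodic_pt D \<sigma> x then
     enat (LEAST p. p \<ge> 1 \<and> (\<exists>n. x \<in> dom_iter D \<sigma> (n + p) \<and> (\<sigma> ^^ (n + p)) x = (\<sigma> ^^ n) x))
     else \<infinity>)"

definition per_l :: "'a set \<Rightarrow> ('a \<Rightarrow> 'a) \<Rightarrow> 'a \<Rightarrow> enat" where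
  "per_l D \<sigma> x = (if periodic_pt D \<sigma> x then
     enat (LEAST l. x \<in> dom_iter D \<sigma> (the_enat (per_p D \<sigma> x) + l) \<and>
                    (\<sigma> ^^ (the_enat (per_p D \<sigma> x) + l)) x = (\<sigma> ^^ l) x)
     else \<infinity>)"

end

theory Submission
  imports Defs
begin

text \<open>
  The isotropy group at \<open>x\<close> is trivial unless \<open>x\<close> is periodic, when it is
  \<open>{(x, k p(x), x)}\<close>; so \<open>q(x, z)\<close> depends only on \<open>z\<^sup>p\<^sup>(\<^sup>x\<^sup>)\<close> and every point of \<open>Stab(G)^\<close> is
  of the form \<open>q(x, z)\<close>.

  Necessity: \<open>q\<close> is continuous and the arrows \<open>(\<sigma> x, -1, x)\<close> transport \<open>C\<close>, giving (i) and (ii).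
  A fiber other than \<open>\<emptyset>\<close> and \<open>\<bbbT>\<close> needs nontrivial isotropy, and is rotation invariant because
  \<open>q(x, \<cdot>)\<close> is. Finally, the preperiod is locally constant on each coincidence set
  \<open>{x. \<sigma>\<^sup>m x = \<sigma>\<^sup>n x}\<close>, so a compact set of isotropy near \<open>x0\<close> meets points of another preperiod
  only in units; hence every basic open set around \<open>q(x0, w) \<notin> C\<close> contains all \<open>q(x, z)\<close> with
  \<open>x\<close> near \<open>x0\<close> and \<open>l(x) \<noteq> l(x0)\<close>.

  Sufficiency: take \<open>C = q(Y)\<close>; invariance is (ii) and \<open>Y = q\<^sup>-\<^sup>1(C)\<close> is (iii). For closedness,
  separate \<open>q(x0, w) \<notin> C\<close> from \<open>C\<close>. Near \<open>x0\<close> the fibers miss an arc around \<open>w\<close>, so the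
  nonempty ones belong to points with \<open>l(x) = l(x0)\<close> whose period is bounded (a fiber invariant
  under rotation by \<open>2\<pi>/p\<close> meets every arc of length \<open>2\<pi>/p\<close>); as the finitely many returns
  \<open>\<sigma>\<^sup>l\<^sup>(\<^sup>x\<^sup>0\<^sup>)\<^sup>+\<^sup>q x = \<sigma>\<^sup>l\<^sup>(\<^sup>x\<^sup>0\<^sup>) x\<close> that fail at \<open>x0\<close> also fail nearby, that period is a multiple \<open>q\<close> of
  \<open>p(x0)\<close>. For each of the finitely many \<open>q\<close>, local compactness provides a compact set of loops
  \<open>(x, q, x)\<close> around \<open>x0\<close>, and the basic open set it defines pins down \<open>z\<^sup>q\<close> near \<open>w\<^sup>q\<close>.
\<close>

lemma Hausdorff_space_euclidean_t2: "Hausdorff_space (euclidean :: 'a::t2_space topology)"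
  unfolding Hausdorff_space_def disjnt_def using hausdorff by auto

lemma generate_topology_on_local_basis:
  assumes "generate_topology_on \<S> W" "x \<in> W"
  shows "\<exists>\<F>. finite \<F> \<and> \<F> \<subseteq> \<S> \<and> x \<in> \<Inter>\<F> \<and> \<Inter>\<F> \<subseteq> W"
  using assms
proof (induction arbitrary: x rule: generate_topology_on.induct)
  case (Int a b)
  then obtain \<F>1 \<F>2 where "finite \<F>1" "\<F>1 \<subseteq> \<S>" "x \<in> \<Inter>\<F>1" "\<Inter>\<F>1 \<subseteq> a"
    "finite \<F>2" "\<F>2 \<subseteq> \<S>" "x \<in> \<Inter>\<F>2" "\<Inter>\<F>2 \<subseteq> b" by (meson IntE)
  then show ?case by (intro exI[of _ "\<F>1 \<union> \<F>2"]) auto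
next
  case (UN K)
  then obtain k where "k \<in> K" "x \<in> k" by blast
  then obtain \<F> where "finite \<F>" "\<F> \<subseteq> \<S>" "x \<in> \<Inter>\<F>" "\<Inter>\<F> \<subseteq> k"
    using UN.IH[OF \<open>k \<in> K\<close> \<open>x \<in> k\<close>] by blast
  then show ?case using \<open>k \<in> K\<close> by (intro exI[of _ \<F>]) auto
next
  case (Basis s)
  then show ?case by (intro exI[of _ "{s}"]) auto
qed simp

lemma locally_compact_compact_nhd:
  fixes x :: "'a::t2_space"
  assumes "locally_compact_space (euclidean :: 'a topology)" "open G" "x \<in> G"
  obtains U W where "open U" "compact W" "x \<in> U" "U \<subseteq> W" "W \<subseteq> G"
proof -
  have "neighbourhood_base_of (compactin euclidean) (euclidean :: 'a topology)"
    using locally_compact_space_neighbourhood_base[OF disjI1[OF Hausdorff_space_euclidean_t2]]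
      assms(1) by blast
  then show ?thesis
    using assms(2,3) that unfolding neighbourhood_base_of
    by (metis open_openin compactin_euclidean_iff)
qed

section \<open>Rotations of the circle\<close>

lemma cis_2pi_div_power:
  assumes "p > 0"
  shows "cis (2 * pi / real p) ^ p = 1"
proof -
  have "cis (2 * pi / real p) ^ p = cis (real p * (2 * pi / real p))" by (rule Complex.DeMoivre)
  also have "\<dots> = 1" using assms by (simp add: complex_eq_iff)
  finally show ?thesis .
qed

lemma circle_eq_cis_Arg:
  assumes "v \<in> circle"
  shows "v = cis (Arg v)"
proof -
  have "v \<noteq> 0" "norm v = 1" using assms by auto
  then show ?thesis using cis_Arg[of v] by (simp add: sgn_eq)
qed

lemma circle_has_root:
  assumes "c \<in> circle" "p > 0"
  obtains z where "z \<in> circle" "z ^ p = c"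
proof (rule that)
  show "cis (Arg c / real p) \<in> circle" by simp
  have "cis (Arg c / real p) ^ p = cis (real p * (Arg c / real p))" by (rule Complex.DeMoivre)
  then have "cis (Arg c / real p) ^ p = cis (Arg c)" using assms(2) by simp
  then show "cis (Arg c / real p) ^ p = c" using circle_eq_cis_Arg[OF assms(1)] by simp
qed

lemma mult_hom_int_eq_power_int:
  fixes f :: "int \<Rightarrow> 'a::field"
  assumes hom: "\<And>a b. f (a + b) = f a * f b" and "f 1 \<noteq> 0"
  shows "f j = f 1 powi j"
proof -
  have f0: "f 0 = 1" using hom[of 1 0] assms(2) by simp
  show ?thesis
  proof (induction j rule: int_induct[of _ 0])
    case (step1 i)
    then show ?case using hom[of i 1] assms(2) by (simp add: power_int_add)
  next
    case (step2 i)
    have "f i = f (i - 1) * f 1" using hom[of "i - 1" 1] by simp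
    then show ?case using step2 assms(2) by (simp add: power_int_diff field_simps)
  qed (simp add: f0)
qed

lemma power_eq_imp_rotation:
  assumes "(z::complex) \<in> circle" "w \<in> circle" "p > 0" "z ^ p = w ^ p"
  shows "\<exists>j::nat. z = cis (2 * pi / real p) ^ j * w"
proof -
  have w0: "w \<noteq> 0" using assms(2) by auto
  have "(z / w) ^ p = 1" using assms(4) w0 by (simp add: power_divide)
  then obtain k where k: "z / w = cis (2 * pi * real k / real p)"
    using Complex.bij_betw_roots_unity[OF assms(3)] unfolding bij_betw_def by auto
  have "cis (2 * pi / real p) ^ k = cis (real k * (2 * pi / real p))" by (rule Complex.DeMoivre)
  then have "cis (2 * pi / real p) ^ k = cis (2 * pi * real k / real p)" by (simp add: field_simps)
  then show ?thesis using k w0 by (intro exI[of _ k]) (simp add: field_simps)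
qed

lemma norm_cis_diff_le: "norm (cis a - cis b) \<le> \<bar>a - b\<bar>"
proof -
  have "norm (cis t - 1) \<le> \<bar>t\<bar>" for t :: real
  proof -
    have "(norm (cis t - 1))\<^sup>2 = (cos t - 1)\<^sup>2 + (sin t)\<^sup>2" by (simp add: cmod_power2)
    also have "\<dots> = 2 - 2 * cos t"
      using sin_cos_squared_add[of t] by (simp add: power2_eq_square algebra_simps)
    also have "cos t = 1 - 2 * sin (t / 2) ^ 2" using cos_double_sin[of "t / 2"] by simp
    also have "2 - 2 * (1 - 2 * sin (t / 2) ^ 2) = 4 * (sin (t / 2))\<^sup>2" by simp
    also have "\<dots> \<le> 4 * (t / 2)\<^sup>2"
      using abs_sin_x_le_abs_x[of "t / 2"] abs_le_square_iff by (metis mult_left_mono zero_le_numeral)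
    also have "\<dots> = \<bar>t\<bar>\<^sup>2" by (simp add: power2_eq_square)
    finally show ?thesis by (rule power2_le_imp_le) simp
  qed
  moreover have "cis a - cis b = cis b * (cis (a - b) - 1)" by (simp add: cis_mult algebra_simps)
  ultimately show ?thesis by (simp add: norm_mult)
qed

lemma exists_rotation_near:
  assumes "(u::complex) \<in> circle" "w \<in> circle" "p > 0"
  shows "\<exists>j::nat. norm (cis (2 * pi / real p) ^ j * u - w) \<le> 2 * pi / real p"
proof -
  define \<delta> where "\<delta> = 2 * pi / real p"
  have d0: "\<delta> > 0" unfolding \<delta>_def using assms(3) by simp
  define \<alpha> where "\<alpha> = Arg u"
  define \<theta> where "\<theta> = Arg w - \<alpha> + 2 * pi"
  have t0: "\<theta> \<ge> 0" unfolding \<theta>_def \<alpha>_def using Arg_bounded[of u] Arg_bounded[of w] by linarith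
  have wt: "w = cis (\<alpha> + \<theta>)"
  proof -
    have "cis (\<alpha> + \<theta>) = cis (Arg w) * cis (2 * pi)" unfolding \<theta>_def by (simp only: cis_mult) simp
    then show ?thesis using circle_eq_cis_Arg[OF assms(2)] by simp
  qed
  define j where "j = nat \<lfloor>\<theta> / \<delta>\<rfloor>"
  have "\<lfloor>\<theta> / \<delta>\<rfloor> \<ge> 0" using t0 d0 by simp
  then have "real j = \<lfloor>\<theta> / \<delta>\<rfloor>" unfolding j_def by simp
  then have "real j \<le> \<theta> / \<delta>" "\<theta> / \<delta> < real j + 1" by linarith+
  then have j: "real j * \<delta> \<le> \<theta>" "\<theta> < real j * \<delta> + \<delta>" using d0 by (simp_all add: field_simps)
  have "cis \<delta> ^ j * u = cis (\<alpha> + real j * \<delta>)"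
    using circle_eq_cis_Arg[OF assms(1)] unfolding \<alpha>_def by (metis Complex.DeMoivre cis_mult add.commute)
  then have "norm (cis \<delta> ^ j * u - w) \<le> \<bar>(\<alpha> + real j * \<delta>) - (\<alpha> + \<theta>)\<bar>"
    using wt norm_cis_diff_le[of "\<alpha> + real j * \<delta>" "\<alpha> + \<theta>"] by simp
  also have "\<dots> \<le> \<delta>" using j by simp
  finally show ?thesis unfolding \<delta>_def by blast
qed

lemma power_mult_mem:
  fixes c :: "'a::monoid_mult"
  assumes "(\<lambda>z. c * z) ` F \<subseteq> F" "z \<in> F"
  shows "c ^ j * z \<in> F"
proof (induction j)
  case (Suc j)
  then have "c * (c ^ j * z) \<in> F" using assms(1) by blast
  then show ?case by (simp add: mult.assoc)
qed (use assms(2) in simp)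

lemma compact_circle_power_int_notin:
  assumes "openin (top_of_set circle) V"
  shows "compact {z \<in> circle. z powi k \<notin> V}"
proof -
  obtain V' where V': "open V'" "V = circle \<inter> V'" using assms openin_open by blast
  have eq: "{z \<in> circle. z powi k \<notin> V} = circle \<inter> (\<lambda>z. z powi k) -` (- V')"
    using V' by (auto simp: norm_power_int)
  have "continuous_on circle (\<lambda>z::complex. z powi k)"
    by (intro continuous_on_power_int continuous_on_id) auto
  then have "closed (circle \<inter> (\<lambda>z. z powi k) -` (- V'))"
    using V'(1) by (intro continuous_closed_preimage) auto
  moreover have "bounded (circle \<inter> (\<lambda>z. z powi k) -` (- V'))"
    by (rule bounded_Int) simp
  ultimately show ?thesis unfolding eq by (simp add: compact_eq_bounded_closed)
qed

text \<open>Remove from the circle the (compact) image under \<open>z \<mapsto> z\<^sup>q\<close> of the points whose orbit under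
  rotation by \<open>2\<pi>/q\<close> stays \<open>\<epsilon>\<close>-far from \<open>w\<close>.\<close>
lemma circle_power_nhd:
  fixes w :: complex
  assumes "w \<in> circle" "\<epsilon> > 0" "q > 0"
  obtains V where "openin (top_of_set circle) V" "w ^ q \<in> V"
    "\<And>z. z \<in> circle \<Longrightarrow> z ^ q \<in> V \<Longrightarrow> \<exists>j::nat. dist (cis (2 * pi / real q) ^ j * z) w < \<epsilon>"
proof -
  define F where "F = {u \<in> circle. \<forall>j::nat. \<epsilon> \<le> dist (cis (2 * pi / real q) ^ j * u) w}"
  define V where "V = circle - (\<lambda>u. u ^ q) ` F"
  have "F = circle \<inter> (\<Inter>j. {u. \<epsilon> \<le> dist (cis (2 * pi / real q) ^ j * u) w})"
    unfolding F_def by auto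
  moreover have "closed {u. \<epsilon> \<le> dist (cis (2 * pi / real q) ^ j * u) w}" for j :: nat
    by (intro closed_Collect_le continuous_intros)
  ultimately have "closed F" by (auto intro!: closed_Int closed_INT)
  moreover have "bounded F" unfolding F_def by (rule bounded_subset[OF bounded_sphere]) blast
  ultimately have "compact F" by (simp add: compact_eq_bounded_closed)
  then have "closed ((\<lambda>u. u ^ q) ` F)"
    by (intro compact_imp_closed compact_continuous_image continuous_intros)
  then have "openin (top_of_set circle) V"
    unfolding V_def by (simp add: Diff_eq openin_open_Int open_Compl)
  moreover have "w ^ q \<in> V"
  proof -
    have "w ^ q \<notin> (\<lambda>u. u ^ q) ` F"
    proof
      assume "w ^ q \<in> (\<lambda>u. u ^ q) ` F"
      then obtain u where u: "u \<in> F" "w ^ q = u ^ q" by blast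
      then obtain j where "w = cis (2 * pi / real q) ^ j * u"
        using power_eq_imp_rotation[OF assms(1) _ assms(3)] unfolding F_def by blast
      moreover have "\<epsilon> \<le> dist (cis (2 * pi / real q) ^ j * u) w" using u(1) unfolding F_def by blast
      ultimately show False using assms(2) by simp
    qed
    then show ?thesis using assms(1) unfolding V_def by (simp add: norm_power)
  qed
  moreover have "\<exists>j::nat. dist (cis (2 * pi / real q) ^ j * z) w < \<epsilon>"
    if "z \<in> circle" "z ^ q \<in> V" for z
  proof -
    have "z \<notin> F" using that unfolding V_def by blast
    then show ?thesis using that(1) unfolding F_def by (auto simp: not_le)
  qed
  ultimately show ?thesis using that by blast
qed

section \<open>Iterates, periods and preperiods\<close>

locale deaconu_renault =
  fixes D :: "'a::t2_space set" and \<sigma> :: "'a \<Rightarrow> 'a"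
  assumes open_D: "open D" and local_homeo_D: "local_homeo D \<sigma>"
begin

abbreviation Dom :: "nat \<Rightarrow> 'a set" where "Dom n \<equiv> dom_iter D \<sigma> n"
abbreviation iter :: "nat \<Rightarrow> 'a \<Rightarrow> 'a" where "iter n \<equiv> \<sigma> ^^ n"

lemma iter_add: "iter a (iter b x) = iter (a + b) x"
  by (simp add: funpow_add)

lemma Dom_0 [simp]: "Dom 0 = UNIV"
  by (simp add: dom_iter_def)

lemma Dom_add: "x \<in> Dom (a + b) \<longleftrightarrow> x \<in> Dom a \<and> iter a x \<in> Dom b"
proof -
  have "(\<forall>i<a + b. iter i x \<in> D) \<longleftrightarrow> (\<forall>i<a. iter i x \<in> D) \<and> (\<forall>i<b. iter i (iter a x) \<in> D)"
  proof safe
    fix i assume "\<forall>i<a + b. iter i x \<in> D" "i < b"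
    then have "iter (i + a) x \<in> D" by simp
    then show "iter i (iter a x) \<in> D" by (simp add: iter_add)
  next
    fix i assume A: "\<forall>i<a. iter i x \<in> D" "\<forall>i<b. iter i (iter a x) \<in> D" "i < a + b"
    show "iter i x \<in> D"
    proof (cases "i < a")
      case False
      then have "iter i x = iter (i - a) (iter a x)" by (simp add: iter_add)
      moreover have "i - a < b" using A(3) False by simp
      ultimately show ?thesis using A(2) by simp
    qed (use A in auto)
  qed auto
  then show ?thesis by (simp add: dom_iter_def)
qed

lemma Dom_Suc: "x \<in> Dom (Suc n) \<longleftrightarrow> x \<in> Dom n \<and> iter n x \<in> D"
  using Dom_add[of x n 1] by (simp add: dom_iter_def)

lemma Dom_antimono: "a \<le> b \<Longrightarrow> x \<in> Dom b \<Longrightarrow> x \<in> Dom a"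
  by (auto simp: dom_iter_def)

lemma local_homeo_at:
  assumes "y \<in> D"
  obtains U g where "open U" "y \<in> U" "U \<subseteq> D" "homeomorphism U (\<sigma> ` U) \<sigma> g"
  using local_homeo_D assms unfolding local_homeo_def by blast

lemma continuous_on_D: "continuous_on D \<sigma>"
proof -
  have "isCont \<sigma> x" if xD: "x \<in> D" for x
  proof -
    obtain U g where U: "open U" "x \<in> U" "U \<subseteq> D" "homeomorphism U (\<sigma> ` U) \<sigma> g"
      using local_homeo_at[OF xD] by blast
    then have "continuous_on U \<sigma>" unfolding homeomorphism_def by blast
    then show ?thesis using U continuous_on_eq_continuous_at[OF U(1)] by blast
  qed
  then show ?thesis using continuous_on_eq_continuous_at[OF open_D] by blast
qed

lemma locally_inj:
  assumes "y \<in> D"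
  obtains U where "open U" "y \<in> U" "U \<subseteq> D" "inj_on \<sigma> U"
proof -
  obtain U g where U: "open U" "y \<in> U" "U \<subseteq> D" "homeomorphism U (\<sigma> ` U) \<sigma> g"
    using local_homeo_at[OF assms] by blast
  then have "inj_on \<sigma> U" by (intro inj_on_inverseI[of U g]) (auto simp: homeomorphism_def)
  then show ?thesis using U that by blast
qed

lemma open_iter_vimage: "open U \<Longrightarrow> open {x \<in> Dom n. iter n x \<in> U}"
proof (induction n arbitrary: U)
  case (Suc n)
  have "{x \<in> Dom (Suc n). iter (Suc n) x \<in> U} = {x \<in> Dom n. iter n x \<in> D \<inter> \<sigma> -` U}"
    by (auto simp: Dom_Suc)
  moreover have "open (D \<inter> \<sigma> -` U)"
    using continuous_on_open_vimage[OF open_D, THEN iffD1, OF continuous_on_D] Suc.prems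
    by (simp add: Int_commute)
  ultimately show ?case using Suc.IH[of "D \<inter> \<sigma> -` U"] by simp
qed simp

lemma open_Dom: "open (Dom n)"
  using open_iter_vimage[of UNIV n] by simp

lemma open_iter_neq: "open {x \<in> Dom a \<inter> Dom b. iter a x \<noteq> iter b x}"
proof (subst open_subopen, intro ballI)
  fix x0 assume x0: "x0 \<in> {x \<in> Dom a \<inter> Dom b. iter a x \<noteq> iter b x}"
  then obtain A B where AB: "open A" "open B" "iter a x0 \<in> A" "iter b x0 \<in> B" "A \<inter> B = {}"
    using hausdorff[of "iter a x0" "iter b x0"] by blast
  let ?U = "{x \<in> Dom a. iter a x \<in> A} \<inter> {x \<in> Dom b. iter b x \<in> B}"
  have "open ?U" using open_iter_vimage AB by blast
  moreover have "x0 \<in> ?U" "?U \<subseteq> {x \<in> Dom a \<inter> Dom b. iter a x \<noteq> iter b x}" using x0 AB by auto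
  ultimately show "\<exists>T. open T \<and> x0 \<in> T \<and> T \<subseteq> {x \<in> Dom a \<inter> Dom b. iter a x \<noteq> iter b x}"
    by blast
qed

definition cyclic :: "'a \<Rightarrow> bool" where
  "cyclic y \<longleftrightarrow> (\<exists>q>0. y \<in> Dom q \<and> iter q y = y)"

lemma iter_mod_cycle:
  assumes "iter q y = y" "q > 0"
  shows "iter j y = iter (j mod q) y"
proof (induction j rule: less_induct)
  case (less j)
  show ?case
  proof (cases "j < q")
    case False
    then have "iter j y = iter (j - q) (iter q y)" by (simp add: iter_add)
    also have "\<dots> = iter ((j - q) mod q) y" using less False assms by simp
    finally show ?thesis using False by (simp add: le_mod_geq)
  qed simp
qed

lemma cyclic_iter_in_D:
  assumes "cyclic y"
  shows "iter i y \<in> D"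
proof -
  obtain q where q: "q > 0" "y \<in> Dom q" "iter q y = y" using assms cyclic_def by blast
  then show ?thesis using iter_mod_cycle[OF q(3,1), of i] mod_less_divisor[OF q(1), of i]
    by (simp add: dom_iter_def)
qed

lemma cyclic_Dom: "cyclic y \<Longrightarrow> y \<in> Dom j"
  using cyclic_iter_in_D by (simp add: dom_iter_def)

lemma cyclic_iter:
  assumes "cyclic y"
  shows "cyclic (iter a y)"
proof -
  obtain q where q: "q > 0" "y \<in> Dom q" "iter q y = y" using assms cyclic_def by blast
  have "iter a y \<in> Dom q" using cyclic_Dom[OF assms, of "a + q"] Dom_add by blast
  moreover have "iter q (iter a y) = iter a y"
    using q(3) by (metis iter_add add.commute)
  ultimately show ?thesis using q(1) cyclic_def by blast
qed

lemma cyclic_iter_mono: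
  assumes "x \<in> Dom b" "a \<le> b" "cyclic (iter a x)"
  shows "cyclic (iter b x)"
proof -
  have "iter b x = iter (b - a) (iter a x)" using assms(2) by (simp add: iter_add)
  then show ?thesis using cyclic_iter[OF assms(3)] by simp
qed

text \<open>On a cyclic orbit \<open>\<sigma>\<close> is injective, so a return of \<open>\<sigma>\<^sup>a y\<close> after \<open>k\<close> steps is
  already a return of \<open>y\<close>.\<close>
lemma cyclic_cancel_iter:
  assumes "cyclic y" "iter k (iter a y) = iter a y"
  shows "iter k y = y"
proof -
  obtain q where q: "q > 0" "iter q y = y" using assms cyclic_def by blast
  have y1: "iter (q * a) y = y" using iter_mod_cycle[OF q(2,1), of "q * a"] by simp
  have ge: "q * a \<ge> a" using q by simp
  have "iter k y = iter (q * a - a) (iter k (iter a y))"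
    using ge y1 by (metis iter_add add.commute add.left_commute le_add_diff_inverse2)
  also have "\<dots> = iter (q * a) y" using assms(2) ge by (simp add: iter_add)
  finally show ?thesis using y1 by simp
qed

lemma periodic_pt_iff: "periodic_pt D \<sigma> x \<longleftrightarrow> (\<exists>n. x \<in> Dom n \<and> cyclic (iter n x))"
proof
  assume "periodic_pt D \<sigma> x"
  then obtain p n where "p \<ge> 1" "x \<in> Dom (n + p)" "iter (n + p) x = iter n x"
    unfolding periodic_pt_def by blast
  moreover have "iter p (iter n x) = iter (n + p) x" by (simp add: iter_add add.commute)
  ultimately show "\<exists>n. x \<in> Dom n \<and> cyclic (iter n x)" unfolding cyclic_def
    by (intro exI[of _ n] conjI exI[of _ p]) (auto simp: Dom_add)
next
  assume "\<exists>n. x \<in> Dom n \<and> cyclic (iter n x)"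
  then obtain n q where "x \<in> Dom n" "q > 0" "iter n x \<in> Dom q" "iter q (iter n x) = iter n x"
    unfolding cyclic_def by blast
  then show "periodic_pt D \<sigma> x" unfolding periodic_pt_def
    by (intro exI[of _ q] exI[of _ n]) (auto simp: Dom_add iter_add add.commute)
qed

definition period :: "'a \<Rightarrow> nat" where
  "period x = (LEAST p. p \<ge> 1 \<and> (\<exists>n. x \<in> Dom (n + p) \<and> iter (n + p) x = iter n x))"

lemma per_p_eq: "periodic_pt D \<sigma> x \<Longrightarrow> per_p D \<sigma> x = enat (period x)"
  by (simp add: per_p_def period_def)

lemma period_LeastI:
  assumes "periodic_pt D \<sigma> x"
  shows "period x \<ge> 1 \<and> (\<exists>n. x \<in> Dom (n + period x) \<and> iter (n + period x) x = iter n x)"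
proof -
  have "\<exists>p. p \<ge> 1 \<and> (\<exists>n. x \<in> Dom (n + p) \<and> iter (n + p) x = iter n x)"
    using assms unfolding periodic_pt_def by blast
  then show ?thesis unfolding period_def by (rule LeastI_ex)
qed

lemma period_pos: "periodic_pt D \<sigma> x \<Longrightarrow> period x > 0"
  using period_LeastI by (simp add: Suc_le_eq)

lemma period_le:
  assumes "1 \<le> r" "x \<in> Dom (N + r)" "iter (N + r) x = iter N x"
  shows "period x \<le> r"
  unfolding period_def by (rule Least_le) (use assms in blast)

lemma period_cycle:
  assumes "periodic_pt D \<sigma> x"
  obtains n where "x \<in> Dom n" "cyclic (iter n x)" "iter (period x) (iter n x) = iter n x"
proof -
  obtain n where n: "x \<in> Dom (n + period x)" "iter (n + period x) x = iter n x"
    using period_LeastI[OF assms] by blast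
  have "iter (period x) (iter n x) = iter n x" using n(2) by (simp add: iter_add add.commute)
  moreover have "x \<in> Dom n" "iter n x \<in> Dom (period x)" using n(1) Dom_add by blast+
  moreover have "period x > 0" using period_pos[OF assms] .
  ultimately show ?thesis using that[of n] unfolding cyclic_def by blast
qed

lemma period_cycle_from:
  assumes per: "periodic_pt D \<sigma> x" and "x \<in> Dom l" "cyclic (iter l x)"
  shows "x \<in> Dom (period x + l)" "iter (period x + l) x = iter l x"
proof -
  obtain n where n: "x \<in> Dom n" "cyclic (iter n x)" "iter (period x) (iter n x) = iter n x"
    using period_cycle[OF per] .
  have "iter (period x) (iter n (iter l x)) = iter l (iter (period x) (iter n x))"
    by (simp add: iter_add ac_simps)
  also have "\<dots> = iter n (iter l x)" using n(3) by (simp add: iter_add add.commute)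
  finally have "iter (period x) (iter l x) = iter l x" using cyclic_cancel_iter assms(3) by blast
  then show "iter (period x + l) x = iter l x" by (simp add: iter_add)
  show "x \<in> Dom (period x + l)" using assms(2,3) cyclic_Dom Dom_add add.commute by metis
qed

lemma period_dvd:
  assumes per: "periodic_pt D \<sigma> x" and "x \<in> Dom n" "cyclic (iter n x)"
    and "iter k (iter n x) = iter n x"
  shows "period x dvd k"
proof (rule ccontr)
  assume ndvd: "\<not> period x dvd k"
  define r where "r = k mod period x"
  have r: "r \<ge> 1" "r < period x" using ndvd period_pos[OF per] unfolding r_def
    by (auto simp: dvd_eq_mod_eq_0)
  have cyc: "iter (period x) (iter n x) = iter n x"
    using period_cycle_from[OF assms(1-3)] by (simp add: iter_add add.commute)
  have "iter r (iter n x) = iter n x"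
    using iter_mod_cycle[OF cyc period_pos[OF per], of k] assms(4) unfolding r_def by simp
  then have "iter (n + r) x = iter n x" by (simp add: iter_add add.commute)
  moreover have "x \<in> Dom (n + r)" using assms(2,3) cyclic_Dom Dom_add by blast
  ultimately have "period x \<le> r" using period_le r(1) by blast
  then show False using r(2) by simp
qed

definition preperiod :: "'a \<Rightarrow> nat" where
  "preperiod x = (LEAST l. x \<in> Dom l \<and> cyclic (iter l x))"

lemma preperiod_cyclic:
  assumes "periodic_pt D \<sigma> x"
  shows "x \<in> Dom (preperiod x)" "cyclic (iter (preperiod x) x)"
proof -
  have "x \<in> Dom (preperiod x) \<and> cyclic (iter (preperiod x) x)"
    using assms unfolding periodic_pt_iff preperiod_def by (elim exE) (rule LeastI)
  then show "x \<in> Dom (preperiod x)" "cyclic (iter (preperiod x) x)" by auto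
qed

lemma preperiod_le: "x \<in> Dom l \<Longrightarrow> cyclic (iter l x) \<Longrightarrow> preperiod x \<le> l"
  unfolding preperiod_def by (rule Least_le) blast

lemma per_l_eq:
  assumes per: "periodic_pt D \<sigma> x"
  shows "per_l D \<sigma> x = enat (preperiod x)"
proof -
  have "(x \<in> Dom (period x + l) \<and> iter (period x + l) x = iter l x) \<longleftrightarrow>
        (x \<in> Dom l \<and> cyclic (iter l x))" for l
  proof
    assume a: "x \<in> Dom (period x + l) \<and> iter (period x + l) x = iter l x"
    then have "x \<in> Dom l" "iter l x \<in> Dom (period x)" using Dom_add add.commute by metis+
    moreover have "iter (period x) (iter l x) = iter l x" using a by (simp add: iter_add)
    ultimately show "x \<in> Dom l \<and> cyclic (iter l x)"
      using period_pos[OF per] unfolding cyclic_def by blast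
  qed (use period_cycle_from[OF per] in blast)
  then show ?thesis unfolding per_l_def preperiod_def per_p_eq[OF per] using per by simp
qed


lemma cyclic_iter_if_return:
  assumes "x \<in> Dom (n + k)" "iter (n + k) x = iter n x" "k > 0"
  shows "x \<in> Dom n" "cyclic (iter n x)" "periodic_pt D \<sigma> x"
proof -
  show xn: "x \<in> Dom n" using assms(1) Dom_add by blast
  have "iter n x \<in> Dom k" using assms(1) Dom_add by blast
  moreover have "iter k (iter n x) = iter n x" using assms(2) by (simp add: iter_add add.commute)
  ultimately show cyc: "cyclic (iter n x)" using assms(3) unfolding cyclic_def by blast
  show "periodic_pt D \<sigma> x" using periodic_pt_iff xn cyc by blast
qed

text \<open>Local injectivity of \<open>\<sigma>\<close> along the orbit lets a coincidence \<open>\<sigma>\<^sup>n\<^sup>+\<^sup>k x = \<sigma>\<^sup>n x\<close>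
  near \<open>x0\<close> be pulled back down to the level \<open>L\<close> at which \<open>x0\<close> itself already coincides.\<close>
lemma iter_coincidence_descends:
  assumes x0: "x0 \<in> Dom (n + k)" "L \<le> n"
    and orbit: "\<And>j. L \<le> j \<Longrightarrow> j < n \<Longrightarrow> iter (j + k) x0 = iter j x0"
  obtains U where "open U" "x0 \<in> U"
    "\<And>x. x \<in> U \<Longrightarrow> iter (n + k) x = iter n x \<Longrightarrow> iter (L + k) x = iter L x"
proof -
  have "\<forall>j\<in>{L..<n}. \<exists>I. open I \<and> iter j x0 \<in> I \<and> inj_on \<sigma> I"
  proof
    fix j assume "j \<in> {L..<n}"
    then have "iter j x0 \<in> D" using x0(1) by (auto simp: dom_iter_def)
    then show "\<exists>I. open I \<and> iter j x0 \<in> I \<and> inj_on \<sigma> I" using locally_inj by metis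
  qed
  then obtain I where I: "\<And>j. j \<in> {L..<n} \<Longrightarrow> open (I j) \<and> iter j x0 \<in> I j \<and> inj_on \<sigma> (I j)"
    using bchoice[of "{L..<n}"] by metis
  define U where
    "U = (\<Inter>j\<in>{L..<n}. {x \<in> Dom j. iter j x \<in> I j} \<inter> {x \<in> Dom (j + k). iter (j + k) x \<in> I j})"
  show ?thesis
  proof (rule that)
    show "open U" unfolding U_def using I open_iter_vimage by (intro open_INT) auto
    show "x0 \<in> U" unfolding U_def
      using I orbit Dom_antimono[OF _ x0(1)] by auto
  next
    fix x assume x: "x \<in> U" "iter (n + k) x = iter n x"
    have "iter (n - i + k) x = iter (n - i) x" if "i \<le> n - L" for i
      using that
    proof (induction i)
      case (Suc i)
      define j where "j = n - Suc i"
      have j: "j \<in> {L..<n}" "n - i = Suc j" using Suc.prems unfolding j_def by auto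
      have "\<sigma> (iter (j + k) x) = \<sigma> (iter j x)" using Suc j by simp
      moreover have "iter (j + k) x \<in> I j" "iter j x \<in> I j" using x(1) j unfolding U_def by auto
      ultimately show ?case using I[OF j(1)] unfolding j_def[symmetric] inj_on_def by blast
    qed (use x in simp)
    from this[of "n - L"] show "iter (L + k) x = iter L x" using x0(2) by simp
  qed
qed

lemma preperiod_lower_nhd:
  assumes x0: "x0 \<in> Dom (n + k)" "iter (n + k) x0 = iter n x0" "k > 0"
  obtains U where "open U" "x0 \<in> U"
    "\<And>x. x \<in> U \<Longrightarrow> x \<in> Dom (n + k) \<Longrightarrow> iter (n + k) x = iter n x \<Longrightarrow>
       preperiod x0 \<le> preperiod x"
proof (cases "preperiod x0 = 0")
  case True
  show ?thesis by (rule that[of UNIV]) (use True in auto)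
next
  case False
  define j0 where "j0 = preperiod x0 - 1"
  have j0: "preperiod x0 = Suc j0" using False j0_def by simp
  have per0: "periodic_pt D \<sigma> x0" using cyclic_iter_if_return[OF x0] by blast
  have "j0 < n" using preperiod_le cyclic_iter_if_return[OF x0] j0 by fastforce
  then have x0j: "x0 \<in> Dom (j0 + k)" "x0 \<in> Dom j0" using Dom_antimono[OF _ x0(1)] by auto
  have "iter (j0 + k) x0 \<noteq> iter j0 x0"
  proof
    assume "iter (j0 + k) x0 = iter j0 x0"
    then have "preperiod x0 \<le> j0"
      using preperiod_le cyclic_iter_if_return x0j(1) x0(3) by blast
    then show False using j0 by simp
  qed
  then have x0U: "x0 \<in> {x \<in> Dom (j0 + k) \<inter> Dom j0. iter (j0 + k) x \<noteq> iter j0 x}"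
    using x0j by simp
  show ?thesis
  proof (rule that[OF open_iter_neq x0U])
    fix x assume x: "x \<in> {x \<in> Dom (j0 + k) \<inter> Dom j0. iter (j0 + k) x \<noteq> iter j0 x}"
      "x \<in> Dom (n + k)" "iter (n + k) x = iter n x"
    have per: "periodic_pt D \<sigma> x" using cyclic_iter_if_return[OF x(2,3) x0(3)] by blast
    show "preperiod x0 \<le> preperiod x"
    proof (rule ccontr)
      assume "\<not> preperiod x0 \<le> preperiod x"
      then have le: "preperiod x \<le> j0" using j0 by simp
      have xj: "x \<in> Dom j0" using x(1) by blast
      have cyc: "cyclic (iter j0 x)"
        using cyclic_iter_mono[OF xj le preperiod_cyclic(2)[OF per]] .
      have "j0 \<le> n" using \<open>j0 < n\<close> by simp
      then have "iter k (iter (n - j0) (iter j0 x)) = iter (n - j0) (iter j0 x)"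
        using x(3) by (simp add: iter_add add.commute)
      then have "iter k (iter j0 x) = iter j0 x" by (rule cyclic_cancel_iter[OF cyc])
      then have "iter (j0 + k) x = iter j0 x" by (simp add: iter_add add.commute)
      then show False using x(1) by blast
    qed
  qed
qed

lemma preperiod_locally_constant:
  assumes x0: "x0 \<in> Dom (n + k)" "iter (n + k) x0 = iter n x0" "k > 0"
  obtains U where "open U" "x0 \<in> U"
    "\<And>x. x \<in> U \<Longrightarrow> x \<in> Dom (n + k) \<Longrightarrow> iter (n + k) x = iter n x \<Longrightarrow>
       periodic_pt D \<sigma> x \<and> preperiod x = preperiod x0"
proof -
  define L where "L = preperiod x0"
  have per0: "periodic_pt D \<sigma> x0" using cyclic_iter_if_return[OF x0] by blast
  have Ln: "L \<le> n" unfolding L_def using preperiod_le cyclic_iter_if_return[OF x0] by blast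
  have cycL: "cyclic (iter L x0)" unfolding L_def using preperiod_cyclic[OF per0] by blast
  have "iter k (iter L x0) = iter L x0"
  proof (rule cyclic_cancel_iter[OF cycL])
    show "iter k (iter (n - L) (iter L x0)) = iter (n - L) (iter L x0)"
      using x0(2) Ln by (simp add: iter_add add.commute)
  qed
  then have orbit: "iter (j + k) x0 = iter j x0" if "L \<le> j" for j
  proof -
    have "iter (j + k) x0 = iter (j - L) (iter k (iter L x0))"
      using that by (simp add: iter_add ac_simps)
    also have "\<dots> = iter j x0" using \<open>iter k (iter L x0) = iter L x0\<close> that by (simp add: iter_add)
    finally show ?thesis .
  qed
  obtain U1 where U1: "open U1" "x0 \<in> U1"
    "\<And>x. x \<in> U1 \<Longrightarrow> iter (n + k) x = iter n x \<Longrightarrow> iter (L + k) x = iter L x"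
    using iter_coincidence_descends[OF x0(1) Ln orbit] by blast
  obtain U2 where U2: "open U2" "x0 \<in> U2"
    "\<And>x. x \<in> U2 \<Longrightarrow> x \<in> Dom (n + k) \<Longrightarrow> iter (n + k) x = iter n x \<Longrightarrow> L \<le> preperiod x"
    using preperiod_lower_nhd[OF x0] unfolding L_def by blast
  show ?thesis
  proof (rule that[of "U1 \<inter> U2"])
    fix x assume x: "x \<in> U1 \<inter> U2" "x \<in> Dom (n + k)" "iter (n + k) x = iter n x"
    have "x \<in> Dom (L + k)" using Dom_antimono[OF _ x(2)] Ln by simp
    then have "periodic_pt D \<sigma> x" "preperiod x \<le> L"
      using cyclic_iter_if_return[OF _ U1(3) x0(3)] preperiod_le x by blast+
    then show "periodic_pt D \<sigma> x \<and> preperiod x = preperiod x0"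
      using U2(3) x unfolding L_def by fastforce
  qed (use U1 U2 in auto)
qed

lemma per_l_locally_constant:
  assumes "x0 \<in> Dom m" "x0 \<in> Dom n" "iter m x0 = iter n x0" "m \<noteq> n"
  obtains U where "open U" "x0 \<in> U"
    "\<And>x. x \<in> U \<Longrightarrow> x \<in> Dom m \<Longrightarrow> x \<in> Dom n \<Longrightarrow> iter m x = iter n x \<Longrightarrow>
       per_l D \<sigma> x = per_l D \<sigma> x0"
proof -
  have *: "\<exists>U. open U \<and> x0 \<in> U \<and> (\<forall>x\<in>U. x \<in> Dom b \<longrightarrow> iter b x = iter a x \<longrightarrow>
          per_l D \<sigma> x = per_l D \<sigma> x0)"
    if ab: "x0 \<in> Dom b" "iter b x0 = iter a x0" "a < b" for a b
  proof -
    obtain k where b: "b = a + k" "k > 0" using \<open>a < b\<close> less_imp_add_positive by blast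
    obtain U where U: "open U" "x0 \<in> U"
      "\<And>x. x \<in> U \<Longrightarrow> x \<in> Dom (a + k) \<Longrightarrow> iter (a + k) x = iter a x \<Longrightarrow>
         periodic_pt D \<sigma> x \<and> preperiod x = preperiod x0"
      using preperiod_locally_constant[of x0 a k] ab b by blast
    have "per_l D \<sigma> x = per_l D \<sigma> x0"
      if "x \<in> U" "x \<in> Dom b" "iter b x = iter a x" for x
      using U(3)[of x] U(3)[OF U(2)] that ab b per_l_eq by simp
    then show ?thesis using U(1,2) by blast
  qed
  consider "n < m" | "m < n" using assms(4) by linarith
  then have "\<exists>U. open U \<and> x0 \<in> U \<and> (\<forall>x\<in>U. x \<in> Dom m \<longrightarrow> x \<in> Dom n \<longrightarrow>
          iter m x = iter n x \<longrightarrow> per_l D \<sigma> x = per_l D \<sigma> x0)"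
  proof cases
    case 1
    then show ?thesis using *[of m n] assms by blast
  next
    case 2
    then show ?thesis using *[of n m] assms by (metis (no_types, lifting))
  qed
  then show ?thesis using that by blast
qed


section \<open>The groupoid and its isotropy\<close>

lemma DRG_mem:
  "(x, k, y) \<in> DRG D \<sigma> \<longleftrightarrow>
     (\<exists>m n. k = int m - int n \<and> x \<in> Dom m \<and> y \<in> Dom n \<and> iter m x = iter n y)"
  by (auto simp: DRG_def)

lemma DRG_inv: "(x, a, y) \<in> DRG D \<sigma> \<Longrightarrow> (y, - a, x) \<in> DRG D \<sigma>"
  unfolding DRG_mem by (metis minus_diff_eq)

lemma DRG_mult:
  assumes "(x, a, y) \<in> DRG D \<sigma>" "(y, b, w) \<in> DRG D \<sigma>"
  shows "(x, a + b, w) \<in> DRG D \<sigma>"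
proof -
  have *: "(x, a + b, w) \<in> DRG D \<sigma>"
    if "a = int m - int n" "x \<in> Dom m" "y \<in> Dom n" "iter m x = iter n y"
       "b = int m' - int n'" "y \<in> Dom m'" "w \<in> Dom n'" "iter m' y = iter n' w" "n \<le> m'"
    for x y w a b m n m' n'
  proof -
    have "iter n y \<in> Dom (m' - n)" using that(6,9) Dom_add[of y n "m' - n"] by simp
    then have "x \<in> Dom (m + (m' - n))" using that(2,4) Dom_add by simp
    moreover have "iter (m + (m' - n)) x = iter n' w"
      using that(4,8,9) by (metis iter_add add.commute le_add_diff_inverse2)
    ultimately show ?thesis unfolding DRG_mem using that by (intro exI[of _ "m + (m' - n)"] exI[of _ n']) auto
  qed
  obtain m n m' n' where mn: "a = int m - int n" "x \<in> Dom m" "y \<in> Dom n" "iter m x = iter n y"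
    and mn': "b = int m' - int n'" "y \<in> Dom m'" "w \<in> Dom n'" "iter m' y = iter n' w"
    using assms unfolding DRG_mem by blast
  show ?thesis
  proof (cases "n \<le> m'")
    case True
    then show ?thesis using *[OF mn mn'] by blast
  next
    case False
    have "(w, - b + - a, x) \<in> DRG D \<sigma>"
      using *[of "- b" n' m' w y "- a" n m x] mn mn' False by auto
    then show ?thesis using DRG_inv by fastforce
  qed
qed

lemma DRG_loop_imp_period_dvd:
  assumes "(x, k, x) \<in> DRG D \<sigma>" "k \<noteq> 0"
  shows "periodic_pt D \<sigma> x" "int (period x) dvd k"
proof -
  have gen: "periodic_pt D \<sigma> x \<and> int (period x) dvd int a - int b"
    if "b < a" "x \<in> Dom a" "iter a x = iter b x" for a b
  proof -
    have ret: "x \<in> Dom (b + (a - b))" "iter (b + (a - b)) x = iter b x" "a - b > 0"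
      using that by auto
    note c = cyclic_iter_if_return[OF ret]
    have "iter (a - b) (iter b x) = iter b x" using ret(2) by (simp add: iter_add add.commute)
    then have "period x dvd a - b" using period_dvd[OF c(3,1,2)] by blast
    then show ?thesis using c(3) that(1) by (simp add: of_nat_diff flip: int_dvd_int_iff)
  qed
  obtain m n where mn: "k = int m - int n" "x \<in> Dom m" "x \<in> Dom n" "iter m x = iter n x"
    using assms(1) DRG_mem by blast
  consider "n < m" | "m < n" using mn(1) assms(2) by linarith
  then have "periodic_pt D \<sigma> x \<and> int (period x) dvd k"
  proof cases
    case 1 then show ?thesis using gen[of n m] mn by blast
  next
    case 2 then show ?thesis using gen[of m n] mn by (metis dvd_minus_iff minus_diff_eq)
  qed
  then show "periodic_pt D \<sigma> x" "int (period x) dvd k" by auto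
qed

lemma period_dvd_imp_DRG_loop:
  assumes per: "periodic_pt D \<sigma> x" and "int (period x) dvd k"
  shows "(x, k, x) \<in> DRG D \<sigma>"
proof -
  obtain n0 where n0: "x \<in> Dom n0" "cyclic (iter n0 x)" "iter (period x) (iter n0 x) = iter n0 x"
    using period_cycle[OF per] .
  obtain j where j: "k = int (period x) * j" using assms(2) by (auto simp: dvd_def)
  define t where "t = period x * nat \<bar>j\<bar>"
  have xt: "x \<in> Dom (n0 + t)" using n0 cyclic_Dom Dom_add by blast
  have "iter t (iter n0 x) = iter n0 x"
    using iter_mod_cycle[OF n0(3) period_pos[OF per], of t] unfolding t_def by simp
  then have st: "iter (n0 + t) x = iter n0 x" by (simp add: iter_add add.commute)
  have "k = int (n0 + t) - int n0 \<or> k = int n0 - int (n0 + t)"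
    unfolding t_def j by (cases "j \<ge> 0") auto
  then show ?thesis unfolding DRG_mem using xt st n0(1) by metis
qed

lemma DRG_loop_iff:
  "(x, k, x) \<in> DRG D \<sigma> \<longleftrightarrow> k = 0 \<or> (periodic_pt D \<sigma> x \<and> int (period x) dvd k)"
proof -
  have "(x, 0, x) \<in> DRG D \<sigma>" unfolding DRG_mem by (intro exI[of _ 0]) simp
  then show ?thesis using DRG_loop_imp_period_dvd period_dvd_imp_DRG_loop by blast
qed

lemma iso_at_mem: "h \<in> iso_at D \<sigma> x \<longleftrightarrow> (\<exists>k. h = (x, k, x) \<and> (x, k, x) \<in> DRG D \<sigma>)"
  by (cases h) (auto simp: iso_at_def gr_def gs_def)

lemma iso_at_iff:
  "h \<in> iso_at D \<sigma> x \<longleftrightarrow>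
     (\<exists>k. h = (x, k, x) \<and> (k = 0 \<or> (periodic_pt D \<sigma> x \<and> int (period x) dvd k)))"
  using iso_at_mem DRG_loop_iff by blast

lemma unit_in_iso_at: "(x, 0, x) \<in> iso_at D \<sigma> x"
  using iso_at_iff by blast

lemma iso_bundle_mem: "h \<in> iso_bundle D \<sigma> \<longleftrightarrow> (\<exists>x k. h = (x, k, x) \<and> (x, k, x) \<in> DRG D \<sigma>)"
  by (cases h) (auto simp: iso_bundle_def gr_def gs_def)


abbreviation iso_top :: "'a gel topology" where
  "iso_top \<equiv> subtopology (DRG_top D \<sigma>) (iso_bundle D \<sigma>)"

abbreviation deg :: "'a gel \<Rightarrow> int" where
  "deg h \<equiv> fst (snd h)"

lemma Zset_mem:
  "(x, k, y) \<in> Zset D \<sigma> U m n V \<longleftrightarrow>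
     k = int m - int n \<and> x \<in> U \<and> x \<in> Dom m \<and> y \<in> V \<and> y \<in> Dom n \<and> iter m x = iter n y"
  by (auto simp: Zset_def)

lemma topspace_DRG_top: "topspace (DRG_top D \<sigma>) = DRG D \<sigma>"
proof -
  have "\<Union>{Zset D \<sigma> U m n V | U m n V. open U \<and> open V} = DRG D \<sigma>"
  proof
    show "\<Union>{Zset D \<sigma> U m n V | U m n V. open U \<and> open V} \<subseteq> DRG D \<sigma>"
      by (auto simp: Zset_def DRG_def)
    show "DRG D \<sigma> \<subseteq> \<Union>{Zset D \<sigma> U m n V | U m n V. open U \<and> open V}"
    proof
      fix h assume "h \<in> DRG D \<sigma>"
      then obtain x m n y where "h = (x, int m - int n, y)" "x \<in> Dom m" "y \<in> Dom n"
          "iter m x = iter n y"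
        unfolding DRG_def by blast
      then have "h \<in> Zset D \<sigma> UNIV m n UNIV" using Zset_mem by simp
      then show "h \<in> \<Union>{Zset D \<sigma> U m n V | U m n V. open U \<and> open V}" by blast
    qed
  qed
  then show ?thesis unfolding DRG_top_def by simp
qed

lemma openin_Zset: "open U \<Longrightarrow> open V \<Longrightarrow> openin (DRG_top D \<sigma>) (Zset D \<sigma> U m n V)"
  unfolding DRG_top_def by (rule topology_generated_by_Basis) blast

lemma openin_DRG_gr_deg:
  assumes "open U"
  shows "openin (DRG_top D \<sigma>) {h \<in> DRG D \<sigma>. gr h \<in> U \<and> deg h \<in> A}"
proof -
  have "{h \<in> DRG D \<sigma>. gr h \<in> U \<and> deg h \<in> A} =
        (\<Union>(m, n)\<in>{(m, n). int m - int n \<in> A}. Zset D \<sigma> U m n UNIV)"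
    by (auto simp: Zset_mem DRG_mem gr_def) blast+
  moreover have "openin (DRG_top D \<sigma>) (\<Union>(m, n)\<in>{(m, n). int m - int n \<in> A}. Zset D \<sigma> U m n UNIV)"
    using openin_Zset assms by (intro openin_Union) auto
  ultimately show ?thesis by simp
qed

lemma topspace_iso_top: "topspace iso_top = iso_bundle D \<sigma>"
  using topspace_DRG_top by (auto simp: iso_bundle_def)

lemma continuous_map_gr: "continuous_map iso_top euclidean gr"
proof -
  have "continuous_map (DRG_top D \<sigma>) euclidean gr"
    unfolding continuous_map using openin_DRG_gr_deg[of _ UNIV] topspace_DRG_top by auto
  then show ?thesis by (rule continuous_map_from_subtopology)
qed

lemma openin_iso_deg: "openin iso_top {h \<in> iso_bundle D \<sigma>. deg h \<in> A}"
proof -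
  have "{h \<in> iso_bundle D \<sigma>. deg h \<in> A} = {h \<in> DRG D \<sigma>. gr h \<in> UNIV \<and> deg h \<in> A} \<inter> iso_bundle D \<sigma>"
    by (auto simp: iso_bundle_def)
  then show ?thesis unfolding openin_subtopology using openin_DRG_gr_deg[of UNIV A] by blast
qed

lemma compactin_deg_slice:
  assumes "compactin iso_top K"
  shows "compactin iso_top {h \<in> K. deg h = k}"
proof -
  have "closedin iso_top {h \<in> iso_bundle D \<sigma>. deg h = k}"
    unfolding closedin_def topspace_iso_top
  proof -
    have "iso_bundle D \<sigma> - {h \<in> iso_bundle D \<sigma>. deg h = k} = {h \<in> iso_bundle D \<sigma>. deg h \<in> - {k}}"
      by auto
    then show "{h \<in> iso_bundle D \<sigma>. deg h = k} \<subseteq> iso_bundle D \<sigma> \<and>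
        openin iso_top (iso_bundle D \<sigma> - {h \<in> iso_bundle D \<sigma>. deg h = k})"
      using openin_iso_deg[of "- {k}"] by auto
  qed
  moreover have "{h \<in> K. deg h = k} = {h \<in> iso_bundle D \<sigma>. deg h = k} \<inter> K"
    using compactin_subset_topspace[OF assms] topspace_iso_top by auto
  ultimately show ?thesis using closed_Int_compactin[OF _ assms] by simp
qed

lemma finite_deg_image:
  assumes "compactin iso_top K"
  shows "finite (deg ` K)"
proof -
  let ?U = "(\<lambda>k. {h \<in> iso_bundle D \<sigma>. deg h \<in> {k}}) ` UNIV"
  have "K \<subseteq> \<Union>?U" using compactin_subset_topspace[OF assms] topspace_iso_top by auto
  moreover have "\<forall>U\<in>?U. openin iso_top U" using openin_iso_deg by blast
  ultimately obtain F where F: "finite F" "F \<subseteq> ?U" "K \<subseteq> \<Union>F"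
    using assms unfolding compactin_def by meson
  then obtain K' where K': "finite K'" "F = (\<lambda>k. {h \<in> iso_bundle D \<sigma>. deg h \<in> {k}}) ` K'"
    by (meson finite_subset_image subset_UNIV)
  have "deg ` K \<subseteq> K'" using F(3) K'(2) by auto
  then show ?thesis using K'(1) finite_subset by blast
qed

lemma compact_gr_deg_slice:
  assumes "compactin iso_top K"
  shows "compact (gr ` {h \<in> K. deg h = k})"
  using image_compactin[OF compactin_deg_slice[OF assms] continuous_map_gr] by simp

lemma compactin_iso_top_gr:
  assumes "compactin iso_top K" "h \<in> K"
  shows "h \<in> iso_at D \<sigma> x \<longleftrightarrow> gr h = x"
proof -
  have "h \<in> iso_bundle D \<sigma>"
    using compactin_subset_topspace[OF assms(1)] topspace_iso_top assms(2) by auto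
  then show ?thesis using iso_bundle_mem iso_at_mem by (auto simp: gr_def)
qed


section \<open>The map \<open>q\<close> and the topology of \<open>Stab(G)^\<close>\<close>

lemma snd_qmap: "snd (qmap D \<sigma> x z) = (\<lambda>h. if h \<in> iso_at D \<sigma> x then z powi deg h else 0)"
  by (simp add: qmap_def)

lemma fst_qmap: "fst (qmap D \<sigma> x z) = x"
  by (simp add: qmap_def)

lemma qmap_eqI:
  assumes "\<And>k. (x, k, x) \<in> iso_at D \<sigma> x \<Longrightarrow> z powi k = w powi k"
  shows "qmap D \<sigma> x z = qmap D \<sigma> x w"
proof -
  have "snd (qmap D \<sigma> x z) = snd (qmap D \<sigma> x w)"
    using assms iso_at_iff by (auto simp: snd_qmap fun_eq_iff)
  then show ?thesis by (simp add: qmap_def)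
qed

lemma qmap_in_Stab_dual:
  assumes "z \<in> circle"
  shows "qmap D \<sigma> x z \<in> Stab_dual D \<sigma>"
proof -
  have "gmul h1 h2 \<in> iso_at D \<sigma> x \<and> deg (gmul h1 h2) = deg h1 + deg h2"
    if "h1 \<in> iso_at D \<sigma> x" "h2 \<in> iso_at D \<sigma> x" for h1 h2
    using that iso_at_iff by (auto simp: gmul_def)
  moreover have "z \<noteq> 0" using assms by auto
  ultimately have "is_char D \<sigma> x (snd (qmap D \<sigma> x z))"
    using assms unfolding is_char_def by (simp add: snd_qmap norm_power_int power_int_add)
  then show ?thesis unfolding Stab_dual_def qmap_def by simp
qed

text \<open>Take for \<open>z\<close> a \<open>period x\<close>-th root of the value at the generator \<open>(x, period x, x)\<close>.\<close>
lemma is_char_eq_qmap: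
  assumes ch: "is_char D \<sigma> x ch"
  obtains z where "z \<in> circle" "ch = snd (qmap D \<sigma> x z)"
proof -
  have circ: "\<And>h. h \<in> iso_at D \<sigma> x \<Longrightarrow> ch h \<in> circle"
    and zero: "\<And>h. h \<notin> iso_at D \<sigma> x \<Longrightarrow> ch h = 0"
    using ch unfolding is_char_def by auto
  have mult: "ch (x, a + b, x) = ch (x, a, x) * ch (x, b, x)"
    if "(x, a, x) \<in> iso_at D \<sigma> x" "(x, b, x) \<in> iso_at D \<sigma> x" for a b
    using ch that unfolding is_char_def by (metis gmul_def fst_conv snd_conv)
  have unit: "ch (x, 0, x) = 1"
    using mult[OF unit_in_iso_at unit_in_iso_at] circ[OF unit_in_iso_at]
    by (metis add_0 mult_cancel_left1 norm_zero mem_sphere_0 zero_neq_one)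
  show ?thesis
  proof (cases "periodic_pt D \<sigma> x")
    case False
    then have "ch = snd (qmap D \<sigma> x 1)"
      using unit zero iso_at_iff by (auto simp: snd_qmap fun_eq_iff)
    then show ?thesis using that[of 1] by simp
  next
    case per: True
    define p where "p = period x"
    have p0: "p > 0" using period_pos[OF per] p_def by simp
    have isoj: "(x, int p * j, x) \<in> iso_at D \<sigma> x" for j
      using iso_at_iff per p_def by auto
    define f where "f j = ch (x, int p * j, x)" for j
    have "f j = f 1 powi j" for j
    proof (rule mult_hom_int_eq_power_int)
      show "f (a + b) = f a * f b" for a b
        using mult[OF isoj[of a] isoj[of b]] unfolding f_def by (simp add: distrib_left)
      show "f 1 \<noteq> 0" using circ[OF isoj[of 1]] unfolding f_def by auto
    qed
    moreover obtain z where z: "z \<in> circle" "z ^ p = f 1"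
      using circle_has_root[OF _ p0] circ[OF isoj[of 1]] unfolding f_def by blast
    ultimately have "ch (x, int p * j, x) = z powi (int p * j)" for j
      unfolding f_def by (simp add: power_int_mult)
    then have "ch = snd (qmap D \<sigma> x z)"
      using zero unit iso_at_iff per unfolding p_def by (auto simp: snd_qmap fun_eq_iff elim!: dvdE)
    then show ?thesis using that z(1) by blast
  qed
qed

lemma qmap_eq_iff:
  assumes per: "periodic_pt D \<sigma> x"
  shows "qmap D \<sigma> x z = qmap D \<sigma> x w \<longleftrightarrow> z ^ period x = w ^ period x"
proof
  assume "qmap D \<sigma> x z = qmap D \<sigma> x w"
  then have "snd (qmap D \<sigma> x z) (x, int (period x), x) = snd (qmap D \<sigma> x w) (x, int (period x), x)"
    by simp
  moreover have "(x, int (period x), x) \<in> iso_at D \<sigma> x" using iso_at_iff per by simp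
  ultimately show "z ^ period x = w ^ period x" by (simp add: snd_qmap)
next
  assume "z ^ period x = w ^ period x"
  then show "qmap D \<sigma> x z = qmap D \<sigma> x w"
    by (intro qmap_eqI) (auto simp: iso_at_iff power_int_mult elim!: dvdE)
qed

lemma qmap_rotate:
  assumes "periodic_pt D \<sigma> x"
  shows "qmap D \<sigma> x (cis (2 * pi / real (period x)) * z) = qmap D \<sigma> x z"
  using qmap_eq_iff[OF assms] cis_2pi_div_power[OF period_pos[OF assms]]
  by (simp add: power_mult_distrib)

lemma qmap_nonperiodic: "\<not> periodic_pt D \<sigma> x \<Longrightarrow> qmap D \<sigma> x z = qmap D \<sigma> x w"
  by (intro qmap_eqI) (simp add: iso_at_iff)

lemma act_qmap:
  assumes g: "(a, k, b) \<in> DRG D \<sigma>"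
  shows "act D \<sigma> (a, k, b) (b, snd (qmap D \<sigma> b z)) = qmap D \<sigma> a z"
proof -
  have "(b, j, b) \<in> iso_at D \<sigma> b" if "(a, j, a) \<in> iso_at D \<sigma> a" for j
  proof -
    have "(b, - k + j + k, b) \<in> DRG D \<sigma>"
      using DRG_mult[OF DRG_mult[OF DRG_inv[OF g]] g] that iso_at_mem by blast
    then show ?thesis using iso_at_mem by simp
  qed
  then show ?thesis
    by (auto simp: act_def qmap_def gr_def gmul_def ginv_def fun_eq_iff iso_at_mem)
qed

lemma invariant_qmap_DRG:
  assumes "invariant D \<sigma> C" "(a, k, b) \<in> DRG D \<sigma>" "qmap D \<sigma> b z \<in> C"
  shows "qmap D \<sigma> a z \<in> C"
proof -
  have "(gs (a, k, b), snd (qmap D \<sigma> b z)) \<in> C" using assms(3) by (simp add: gs_def qmap_def)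
  then have "act D \<sigma> (a, k, b) (gs (a, k, b), snd (qmap D \<sigma> b z)) \<in> C"
    using assms(1,2) unfolding invariant_def by blast
  then show ?thesis using act_qmap[OF assms(2)] by (simp add: gs_def)
qed


definition Stab_basis :: "('a \<times> ('a gel \<Rightarrow> complex)) set set" where
  "Stab_basis = {Oset D \<sigma> U K V | U K V. open U \<and> compactin iso_top K \<and> openin (top_of_set circle) V}"

lemma Stab_top_eq: "Stab_top D \<sigma> = topology_generated_by Stab_basis"
  unfolding Stab_top_def Stab_basis_def by simp

lemma openin_Stab_basis: "B \<in> Stab_basis \<Longrightarrow> openin (Stab_top D \<sigma>) B"
  unfolding Stab_top_eq by (rule topology_generated_by_Basis)

lemma Oset_mem:
  "p \<in> Oset D \<sigma> U K V \<longleftrightarrow> p \<in> Stab_dual D \<sigma> \<and> fst p \<in> U \<and> snd p ` (K \<inter> iso_at D \<sigma> (fst p)) \<subseteq> V"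
  by (cases p) (auto simp: Oset_def)

lemma Oset_in_Stab_basis:
  "open U \<Longrightarrow> compactin iso_top K \<Longrightarrow> openin (top_of_set circle) V \<Longrightarrow> Oset D \<sigma> U K V \<in> Stab_basis"
  unfolding Stab_basis_def by blast

lemma Oset_empty_in_Stab_basis: "open U \<Longrightarrow> Oset D \<sigma> U {} circle \<in> Stab_basis"
  by (simp add: Oset_in_Stab_basis)

lemma topspace_Stab_top: "topspace (Stab_top D \<sigma>) = Stab_dual D \<sigma>"
proof -
  have "Oset D \<sigma> UNIV {} circle = Stab_dual D \<sigma>" by (auto simp: Oset_def)
  then have "\<Union>Stab_basis = Stab_dual D \<sigma>"
    using Oset_empty_in_Stab_basis[of UNIV] by (auto simp: Oset_def Stab_basis_def)
  then show ?thesis unfolding Stab_top_eq by simp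
qed

lemma qmap_in_Oset_iff:
  assumes "z \<in> circle" "compactin iso_top K"
  shows "qmap D \<sigma> x z \<in> Oset D \<sigma> U K V \<longleftrightarrow> x \<in> U \<and> (\<forall>h\<in>K. gr h = x \<longrightarrow> z powi deg h \<in> V)"
proof -
  have K: "K \<inter> iso_at D \<sigma> x = {h \<in> K. gr h = x}" using compactin_iso_top_gr[OF assms(2)] by blast
  then have "snd (qmap D \<sigma> x z) ` (K \<inter> iso_at D \<sigma> x) = (\<lambda>h. z powi deg h) ` {h \<in> K. gr h = x}"
    by (auto simp: snd_qmap)
  then show ?thesis using qmap_in_Stab_dual[OF assms(1)] by (auto simp: Oset_mem fst_qmap)
qed

lemma openin_qmap_vimage:
  assumes "open U" "compactin iso_top K" "openin (top_of_set circle) V"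
  shows "openin (top_of_set (UNIV \<times> circle))
           ((\<lambda>(x, z). qmap D \<sigma> x z) -` Oset D \<sigma> U K V \<inter> (UNIV \<times> circle))"
proof -
  define R where "R = (\<Union>k\<in>deg ` K. gr ` {h \<in> K. deg h = k} \<times> {z \<in> circle. z powi k \<notin> V})"
  have "compact R" unfolding R_def
    using finite_deg_image[OF assms(2)] compact_gr_deg_slice[OF assms(2)]
      compact_circle_power_int_notin[OF assms(3)]
    by (intro compact_UN compact_Times) auto
  then have "open ((U \<times> UNIV) - R)" using assms(1) by (intro open_Diff open_Times compact_imp_closed) auto
  moreover have "(x, z) \<in> (\<lambda>(x, z). qmap D \<sigma> x z) -` Oset D \<sigma> U K V \<inter> (UNIV \<times> circle) \<longleftrightarrow>
      (x, z) \<in> (UNIV \<times> circle) \<inter> ((U \<times> UNIV) - R)" for x z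
  proof (cases "z \<in> circle")
    case True
    have "(x, z) \<in> R \<longleftrightarrow> (\<exists>h\<in>K. gr h = x \<and> z powi deg h \<notin> V)" unfolding R_def using True by auto
    then show ?thesis using qmap_in_Oset_iff[OF True assms(2)] by auto
  qed simp
  then have "(\<lambda>(x, z). qmap D \<sigma> x z) -` Oset D \<sigma> U K V \<inter> (UNIV \<times> circle) =
      (UNIV \<times> circle) \<inter> ((U \<times> UNIV) - R)" by (intro set_eqI) (metis surj_pair)
  ultimately show ?thesis by (simp add: openin_open_Int)
qed

lemma continuous_map_qmap:
  "continuous_map (top_of_set (UNIV \<times> circle)) (Stab_top D \<sigma>) (\<lambda>(x, z). qmap D \<sigma> x z)"
  unfolding Stab_top_eq
proof (rule continuous_on_generated_topo)
  fix B assume "B \<in> Stab_basis"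
  then show "openin (top_of_set (UNIV \<times> circle))
      ((\<lambda>(x, z). qmap D \<sigma> x z) -` B \<inter> topspace (top_of_set (UNIV \<times> circle)))"
    using openin_qmap_vimage unfolding Stab_basis_def by auto
next
  show "(\<lambda>(x, z). qmap D \<sigma> x z) ` topspace (top_of_set (UNIV \<times> circle)) \<subseteq> \<Union>Stab_basis"
    using qmap_in_Stab_dual topspace_Stab_top unfolding Stab_top_eq by auto
qed

lemma fiber_eq_if_DRG:
  assumes "\<forall>x\<in>D. F x = F (\<sigma> x)" "(a, k, b) \<in> DRG D \<sigma>"
  shows "F a = F b"
proof -
  have iter: "F x = F (iter m x)" if "x \<in> Dom m" for x m
    using that by (induction m) (use assms(1) Dom_Suc in auto)
  obtain m n where "a \<in> Dom m" "b \<in> Dom n" "iter m a = iter n b" using assms(2) DRG_mem by blast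
  then show ?thesis using iter by metis
qed


section \<open>Necessity\<close>

definition qmap_vimage :: "('a \<times> ('a gel \<Rightarrow> complex)) set \<Rightarrow> ('a \<times> complex) set" where
  "qmap_vimage C = {(x, z) \<in> UNIV \<times> circle. qmap D \<sigma> x z \<in> C}"

lemma fiber_qmap_vimage: "fiber (qmap_vimage C) x = {z \<in> circle. qmap D \<sigma> x z \<in> C}"
  by (auto simp: fiber_def qmap_vimage_def)

lemma closedin_qmap_vimage:
  assumes "closedin (Stab_top D \<sigma>) C"
  shows "closedin (top_of_set (UNIV \<times> circle)) (qmap_vimage C)"
proof -
  have "qmap_vimage C =
        {p \<in> topspace (top_of_set (UNIV \<times> circle)). (\<lambda>(x, z). qmap D \<sigma> x z) p \<in> C}"
    by (auto simp: qmap_vimage_def)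
  then show ?thesis using closedin_continuous_map_preimage[OF continuous_map_qmap assms] by simp
qed

lemma invariant_fiber_sigma:
  assumes "invariant D \<sigma> C" "x \<in> D"
  shows "{z \<in> circle. qmap D \<sigma> x z \<in> C} = {z \<in> circle. qmap D \<sigma> (\<sigma> x) z \<in> C}"
proof -
  have "x \<in> Dom 1" using assms(2) by (simp add: dom_iter_def)
  then have g: "(\<sigma> x, - 1, x) \<in> DRG D \<sigma>" unfolding DRG_mem by (intro exI[of _ 0] exI[of _ 1]) simp
  show ?thesis
    using invariant_qmap_DRG[OF assms(1) g] invariant_qmap_DRG[OF assms(1) DRG_inv[OF g]] by auto
qed

lemma iso_top_local_nhd:
  assumes "h \<in> iso_bundle D \<sigma>"
  obtains N G where "openin (DRG_top D \<sigma>) N" "h \<in> N" "open G" "x0 \<in> G"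
    "\<And>h'. h' \<in> N \<inter> iso_bundle D \<sigma> \<Longrightarrow> gr h' \<in> G \<Longrightarrow> per_l D \<sigma> (gr h') \<noteq> per_l D \<sigma> x0 \<Longrightarrow>
       deg h' = 0 \<and> h = (x0, 0, x0)"
proof -
  obtain y k where h: "h = (y, k, y)" "(y, k, y) \<in> DRG D \<sigma>" using assms iso_bundle_mem by blast
  consider "y \<noteq> x0" | "y = x0" "k = 0" | "y = x0" "k \<noteq> 0" by blast
  then show ?thesis
  proof cases
    case 1
    obtain A B where AB: "open A" "open B" "y \<in> A" "x0 \<in> B" "A \<inter> B = {}"
      using hausdorff[OF 1] by blast
    show ?thesis
    proof (rule that[OF openin_DRG_gr_deg[OF AB(1), of UNIV] _ AB(2,4)])
      show "h \<in> {h \<in> DRG D \<sigma>. gr h \<in> A \<and> deg h \<in> UNIV}" using h AB(3) by (simp add: gr_def)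
    qed (use AB(5) in auto)
  next
    case 2
    show ?thesis
    proof (rule that[OF openin_DRG_gr_deg[of UNIV "{0}"] _ open_UNIV])
      show "h \<in> {h \<in> DRG D \<sigma>. gr h \<in> UNIV \<and> deg h \<in> {0}}" using h 2 by simp
    qed (use h 2 in auto)
  next
    case 3
    obtain m n where mn: "k = int m - int n" "y \<in> Dom m" "y \<in> Dom n" "iter m y = iter n y"
      using h DRG_mem by blast
    have x0mn: "x0 \<in> Dom m" "x0 \<in> Dom n" "iter m x0 = iter n x0" "m \<noteq> n" using mn 3 by auto
    obtain G where G: "open G" "x0 \<in> G"
      "\<And>x. x \<in> G \<Longrightarrow> x \<in> Dom m \<Longrightarrow> x \<in> Dom n \<Longrightarrow> iter m x = iter n x \<Longrightarrow>
         per_l D \<sigma> x = per_l D \<sigma> x0"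
      using per_l_locally_constant[OF x0mn] by blast
    show ?thesis
    proof (rule that[OF openin_Zset[OF open_UNIV open_UNIV, of m n] _ G(1,2)])
      show "h \<in> Zset D \<sigma> UNIV m n UNIV" using h mn Zset_mem by simp
      fix h' assume h': "h' \<in> Zset D \<sigma> UNIV m n UNIV \<inter> iso_bundle D \<sigma>" "gr h' \<in> G"
        "per_l D \<sigma> (gr h') \<noteq> per_l D \<sigma> x0"
      then obtain x k' where "h' = (x, k', x)" "x \<in> Dom m" "x \<in> Dom n" "iter m x = iter n x"
        using iso_bundle_mem Zset_mem by (metis IntE)
      then show "deg h' = 0 \<and> h = (x0, 0, x0)" using G(3) h' by (simp add: gr_def)
    qed
  qed
qed

lemma compactin_iso_top_nhd:
  assumes K: "compactin iso_top K"
  obtains G where "open G" "x0 \<in> G"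
    "\<And>h. h \<in> K \<Longrightarrow> gr h \<in> G \<Longrightarrow> per_l D \<sigma> (gr h) \<noteq> per_l D \<sigma> x0 \<Longrightarrow>
       deg h = 0 \<and> (x0, 0, x0) \<in> K"
proof -
  define Q where "Q N G \<longleftrightarrow> openin (DRG_top D \<sigma>) N \<and> open G \<and> x0 \<in> G \<and>
    (\<forall>h'\<in>N \<inter> K. gr h' \<in> G \<longrightarrow> per_l D \<sigma> (gr h') \<noteq> per_l D \<sigma> x0 \<longrightarrow>
       deg h' = 0 \<and> (x0, 0, x0) \<in> K)" for N G
  have Kiso: "K \<subseteq> iso_bundle D \<sigma>" using compactin_subset_topspace[OF K] topspace_iso_top by simp
  have "\<forall>h\<in>K. \<exists>NG. h \<in> fst NG \<and> Q (fst NG) (snd NG)"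
  proof
    fix h assume "h \<in> K"
    then obtain N G where "openin (DRG_top D \<sigma>) N" "h \<in> N" "open G" "x0 \<in> G"
      "\<And>h'. h' \<in> N \<inter> iso_bundle D \<sigma> \<Longrightarrow> gr h' \<in> G \<Longrightarrow> per_l D \<sigma> (gr h') \<noteq> per_l D \<sigma> x0 \<Longrightarrow>
         deg h' = 0 \<and> h = (x0, 0, x0)"
      using iso_top_local_nhd Kiso by blast
    then show "\<exists>NG. h \<in> fst NG \<and> Q (fst NG) (snd NG)"
      using \<open>h \<in> K\<close> Kiso unfolding Q_def by (intro exI[of _ "(N, G)"]) auto
  qed
  then obtain NG where NG: "\<And>h. h \<in> K \<Longrightarrow> h \<in> fst (NG h) \<and> Q (fst (NG h)) (snd (NG h))"
    by metis
  have "openin iso_top (fst (NG h) \<inter> iso_bundle D \<sigma>)" if "h \<in> K" for h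
    using NG[OF that] unfolding Q_def openin_subtopology by blast
  then have "\<forall>U\<in>(\<lambda>h. fst (NG h) \<inter> iso_bundle D \<sigma>) ` K. openin iso_top U" by blast
  moreover have "K \<subseteq> \<Union>((\<lambda>h. fst (NG h) \<inter> iso_bundle D \<sigma>) ` K)" using NG Kiso by blast
  ultimately obtain F' where F': "finite F'" "F' \<subseteq> (\<lambda>h. fst (NG h) \<inter> iso_bundle D \<sigma>) ` K"
    "K \<subseteq> \<Union>F'"
    using K unfolding compactin_def by meson
  obtain F where "F \<subseteq> K" "finite F" "F' = (\<lambda>h. fst (NG h) \<inter> iso_bundle D \<sigma>) ` F"
    using finite_subset_image[OF F'(1,2)] by blast
  then have F: "finite F" "F \<subseteq> K" "K \<subseteq> \<Union>((\<lambda>h. fst (NG h) \<inter> iso_bundle D \<sigma>) ` F)"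
    using F'(3) by auto
  show ?thesis
  proof (rule that[of "\<Inter>h\<in>F. snd (NG h)"])
    show "open (\<Inter>h\<in>F. snd (NG h))" using F NG unfolding Q_def by (intro open_INT) auto
    show "x0 \<in> (\<Inter>h\<in>F. snd (NG h))" using F NG unfolding Q_def by auto
    fix h assume "h \<in> K" "gr h \<in> (\<Inter>h\<in>F. snd (NG h))" "per_l D \<sigma> (gr h) \<noteq> per_l D \<sigma> x0"
    then show "deg h = 0 \<and> (x0, 0, x0) \<in> K" using F NG unfolding Q_def by blast
  qed
qed

lemma Stab_basis_nhd_other_preperiod:
  assumes "B \<in> Stab_basis" "qmap D \<sigma> x0 w \<in> B"
  obtains G where "open G" "x0 \<in> G"
    "\<And>x z. x \<in> G \<Longrightarrow> per_l D \<sigma> x \<noteq> per_l D \<sigma> x0 \<Longrightarrow> z \<in> circle \<Longrightarrow> qmap D \<sigma> x z \<in> B"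
proof -
  obtain U K V where B: "B = Oset D \<sigma> U K V" "open U" "compactin iso_top K"
    "openin (top_of_set circle) V" using assms(1) unfolding Stab_basis_def by blast
  obtain G where G: "open G" "x0 \<in> G"
    "\<And>h. h \<in> K \<Longrightarrow> gr h \<in> G \<Longrightarrow> per_l D \<sigma> (gr h) \<noteq> per_l D \<sigma> x0 \<Longrightarrow> deg h = 0 \<and> (x0, 0, x0) \<in> K"
    using compactin_iso_top_nhd[OF B(3)] by blast
  have x0U: "x0 \<in> U" and unitV: "(x0, 0, x0) \<in> K \<Longrightarrow> 1 \<in> V"
    using assms(2) unit_in_iso_at unfolding B(1) Oset_mem fst_qmap snd_qmap by force+
  show ?thesis
  proof (rule that[of "U \<inter> G"])
    fix x z assume x: "x \<in> U \<inter> G" "per_l D \<sigma> x \<noteq> per_l D \<sigma> x0" and z: "z \<in> circle"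
    have "z powi deg h \<in> V" if "h \<in> K" "gr h = x" for h
      using G(3)[OF that(1)] that x unitV by auto
    then show "qmap D \<sigma> x z \<in> B" unfolding B(1) using qmap_in_Oset_iff[OF z B(3)] x by blast
  qed (use G B(2) x0U in auto)
qed

lemma openin_Stab_nhd_other_preperiod:
  assumes "openin (Stab_top D \<sigma>) W" "qmap D \<sigma> x0 w \<in> W"
  obtains G where "open G" "x0 \<in> G"
    "\<And>x z. x \<in> G \<Longrightarrow> per_l D \<sigma> x \<noteq> per_l D \<sigma> x0 \<Longrightarrow> z \<in> circle \<Longrightarrow> qmap D \<sigma> x z \<in> W"
proof -
  have "generate_topology_on Stab_basis W"
    using assms(1) unfolding Stab_top_eq by (rule openin_topology_generated_by)
  from generate_topology_on_local_basis[OF this assms(2)]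
  obtain F where F: "finite F" "F \<subseteq> Stab_basis" "qmap D \<sigma> x0 w \<in> \<Inter>F" "\<Inter>F \<subseteq> W"
    by (elim exE conjE)
  have "\<exists>G. open G \<and> x0 \<in> G \<and>
      (\<forall>x z. x \<in> G \<longrightarrow> per_l D \<sigma> x \<noteq> per_l D \<sigma> x0 \<longrightarrow> z \<in> circle \<longrightarrow> qmap D \<sigma> x z \<in> B)"
    if "B \<in> F" for B
  proof -
    have "B \<in> Stab_basis" "qmap D \<sigma> x0 w \<in> B" using F(2,3) that by auto
    from Stab_basis_nhd_other_preperiod[OF this] show ?thesis by metis
  qed
  then obtain G where G: "\<And>B. B \<in> F \<Longrightarrow> open (G B) \<and> x0 \<in> G B \<and>
      (\<forall>x z. x \<in> G B \<longrightarrow> per_l D \<sigma> x \<noteq> per_l D \<sigma> x0 \<longrightarrow> z \<in> circle \<longrightarrow> qmap D \<sigma> x z \<in> B)"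
    by metis
  show ?thesis
  proof (rule that[of "\<Inter>B\<in>F. G B"])
    show "open (\<Inter>B\<in>F. G B)" using F(1) G by (intro open_INT) auto
    show "x0 \<in> (\<Inter>B\<in>F. G B)" using G by simp
    fix x z assume x: "x \<in> (\<Inter>B\<in>F. G B)" "per_l D \<sigma> x \<noteq> per_l D \<sigma> x0" "z \<in> circle"
    have "qmap D \<sigma> x z \<in> B" if "B \<in> F" for B using G[OF that] x that by simp
    then show "qmap D \<sigma> x z \<in> W" using F(4) by blast
  qed
qed


definition admissible :: "('a \<times> complex) set \<Rightarrow> bool" where
  "admissible Y \<longleftrightarrow> closedin (top_of_set (UNIV \<times> circle)) Y \<and>
     (\<forall>x\<in>D. fiber Y x = fiber Y (\<sigma> x)) \<and>
     (\<forall>x0. fiber Y x0 \<noteq> {} \<and> fiber Y x0 \<noteq> circle \<longrightarrow>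
        periodic_pt D \<sigma> x0 \<and>
        (\<lambda>z. cis (2 * pi / real (the_enat (per_p D \<sigma> x0))) * z) ` fiber Y x0 = fiber Y x0 \<and>
        (\<exists>V. open V \<and> x0 \<in> V \<and> (\<forall>x\<in>V. per_l D \<sigma> x \<noteq> per_l D \<sigma> x0 \<longrightarrow> fiber Y x = {})))"

lemma qmap_fiber_rotate:
  assumes "periodic_pt D \<sigma> x"
  shows "(\<lambda>z. cis (2 * pi / real (period x)) * z) ` {z \<in> circle. qmap D \<sigma> x z \<in> C} =
         {z \<in> circle. qmap D \<sigma> x z \<in> C}" (is "?\<omega> ` ?F = ?F")
proof
  show "?\<omega> ` ?F \<subseteq> ?F" using qmap_rotate[OF assms] by (auto simp: norm_mult)
  show "?F \<subseteq> ?\<omega> ` ?F"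
  proof
    fix z assume z: "z \<in> ?F"
    let ?c = "cis (2 * pi / real (period x))"
    have "z = ?c * (z / ?c)" by simp
    moreover have "z / ?c \<in> ?F"
      using z qmap_rotate[OF assms, of "z / ?c"] by (simp add: norm_divide)
    ultimately show "z \<in> ?\<omega> ` ?F" by (rule image_eqI)
  qed
qed

lemma admissible_qmap_vimage:
  assumes C: "closedin (Stab_top D \<sigma>) C" "invariant D \<sigma> C"
  shows "admissible (qmap_vimage C)"
  unfolding admissible_def fiber_qmap_vimage
proof (intro conjI allI impI ballI)
  show "closedin (top_of_set (UNIV \<times> circle)) (qmap_vimage C)"
    by (rule closedin_qmap_vimage[OF C(1)])
  show "{z \<in> circle. qmap D \<sigma> x z \<in> C} = {z \<in> circle. qmap D \<sigma> (\<sigma> x) z \<in> C}" if "x \<in> D" for x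
    by (rule invariant_fiber_sigma[OF C(2) that])
  fix x0 assume F: "{z \<in> circle. qmap D \<sigma> x0 z \<in> C} \<noteq> {} \<and> {z \<in> circle. qmap D \<sigma> x0 z \<in> C} \<noteq> circle"
  then obtain z0 w where z0: "z0 \<in> circle" "qmap D \<sigma> x0 z0 \<in> C" and w: "w \<in> circle" "qmap D \<sigma> x0 w \<notin> C"
    by blast
  show per: "periodic_pt D \<sigma> x0"
    using qmap_nonperiodic[of x0 w z0] z0(2) w(2) by force
  show "(\<lambda>z. cis (2 * pi / real (the_enat (per_p D \<sigma> x0))) * z) ` {z \<in> circle. qmap D \<sigma> x0 z \<in> C} =
        {z \<in> circle. qmap D \<sigma> x0 z \<in> C}"
    using qmap_fiber_rotate[OF per] per_p_eq[OF per] by simp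
  have "openin (Stab_top D \<sigma>) (Stab_dual D \<sigma> - C)"
    using C(1) unfolding closedin_def topspace_Stab_top by blast
  moreover have "qmap D \<sigma> x0 w \<in> Stab_dual D \<sigma> - C" using qmap_in_Stab_dual[OF w(1)] w(2) by blast
  ultimately obtain G where "open G" "x0 \<in> G"
    "\<And>x z. x \<in> G \<Longrightarrow> per_l D \<sigma> x \<noteq> per_l D \<sigma> x0 \<Longrightarrow> z \<in> circle \<Longrightarrow> qmap D \<sigma> x z \<in> Stab_dual D \<sigma> - C"
    by (rule openin_Stab_nhd_other_preperiod) blast
  then show "\<exists>V. open V \<and> x0 \<in> V \<and>
      (\<forall>x\<in>V. per_l D \<sigma> x \<noteq> per_l D \<sigma> x0 \<longrightarrow> {z \<in> circle. qmap D \<sigma> x z \<in> C} = {})"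
    by blast
qed


section \<open>Sufficiency\<close>

lemma nhd_avoiding_short_returns:
  assumes per: "periodic_pt D \<sigma> x0"
  obtains U where "open U" "x0 \<in> U"
    "\<And>x q. x \<in> U \<Longrightarrow> 1 \<le> q \<Longrightarrow> q \<le> N \<Longrightarrow> \<not> period x0 dvd q \<Longrightarrow>
       iter (preperiod x0 + q) x \<noteq> iter (preperiod x0) x"
proof -
  define l where "l = preperiod x0"
  define Q where "Q = {q. 1 \<le> q \<and> q \<le> N \<and> \<not> period x0 dvd q}"
  define U where "U = (\<Inter>q\<in>Q. {x \<in> Dom (l + q) \<inter> Dom l. iter (l + q) x \<noteq> iter l x})"
  have cyc: "x0 \<in> Dom l" "cyclic (iter l x0)" using preperiod_cyclic[OF per] unfolding l_def by auto
  have "x0 \<in> Dom (l + q) \<and> iter (l + q) x0 \<noteq> iter l x0" if "q \<in> Q" for q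
  proof
    show "x0 \<in> Dom (l + q)" using cyc cyclic_Dom Dom_add by blast
    show "iter (l + q) x0 \<noteq> iter l x0"
    proof
      assume "iter (l + q) x0 = iter l x0"
      then have "iter q (iter l x0) = iter l x0" by (simp add: iter_add add.commute)
      then show False using period_dvd[OF per cyc] that unfolding Q_def by blast
    qed
  qed
  then have "x0 \<in> U" unfolding U_def using cyc(1) by blast
  moreover have "finite Q" unfolding Q_def by (rule finite_subset[of _ "{..N}"]) auto
  then have "open U" unfolding U_def using open_iter_neq by (intro open_INT) auto
  ultimately show ?thesis using that unfolding U_def Q_def l_def by blast
qed

lemma loop_vimage_Zset:
  assumes E: "\<And>x. x \<in> E \<Longrightarrow> x \<in> Dom (l + q) \<and> iter (l + q) x = iter l x \<and> preperiod x = l"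
    and "q > 0"
  shows "(\<lambda>x. (x, int q, x)) -` Zset D \<sigma> U m n V \<inter> E =
      (if int q = int m - int n \<and> l \<le> n then E \<inter> U \<inter> V else {})"
proof (intro set_eqI iffI)
  fix x assume x: "x \<in> (\<lambda>x. (x, int q, x)) -` Zset D \<sigma> U m n V \<inter> E"
  then have mn: "m = n + q" "x \<in> U" "x \<in> V" "x \<in> Dom m" "iter m x = iter n x"
    using Zset_mem by auto
  have "preperiod x \<le> n"
    using cyclic_iter_if_return[of x n q] mn \<open>q > 0\<close> preperiod_le by fastforce
  then show "x \<in> (if int q = int m - int n \<and> l \<le> n then E \<inter> U \<inter> V else {})"
    using x mn E by auto
next
  fix x assume x: "x \<in> (if int q = int m - int n \<and> l \<le> n then E \<inter> U \<inter> V else {})"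
  then have mn: "m = n + q" "l \<le> n" "x \<in> E" "x \<in> U" "x \<in> V" by (auto split: if_splits)
  note Ex = E[OF mn(3)]
  then have cyc: "cyclic (iter l x)" "x \<in> Dom l"
    using cyclic_iter_if_return[of x l q] \<open>q > 0\<close> by auto
  have "x \<in> Dom (l + (n - l + q))" "x \<in> Dom (l + (n - l))" using cyc cyclic_Dom Dom_add by blast+
  moreover have "iter (n - l + q) (iter l x) = iter (n - l) (iter l x)"
    using Ex by (metis iter_add add.commute add.left_commute)
  ultimately show "x \<in> (\<lambda>x. (x, int q, x)) -` Zset D \<sigma> U m n V \<inter> E"
    using mn Zset_mem by (simp add: iter_add add.commute add.left_commute)
qed

lemma compactin_loops:
  assumes "compact E"
    and E: "\<And>x. x \<in> E \<Longrightarrow> x \<in> Dom (l + q) \<and> iter (l + q) x = iter l x \<and> preperiod x = l"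
    and "q > 0"
  shows "compactin iso_top ((\<lambda>x. (x, int q, x)) ` E)"
proof -
  have loop: "(x, int q, x) \<in> DRG D \<sigma>" if "x \<in> E" for x
    using E[OF that] Dom_antimono[of l "l + q" x] unfolding DRG_mem
    by (intro exI[of _ "l + q"] exI[of _ l]) auto
  have "continuous_map (top_of_set E) iso_top (\<lambda>x. (x, int q, x))"
  proof (rule continuous_map_into_subtopology)
    show "(\<lambda>x. (x, int q, x)) \<in> topspace (top_of_set E) \<rightarrow> iso_bundle D \<sigma>"
      using loop by (auto simp: iso_bundle_mem)
    show "continuous_map (top_of_set E) (DRG_top D \<sigma>) (\<lambda>x. (x, int q, x))"
      unfolding DRG_top_def
    proof (rule continuous_on_generated_topo)
      fix Z assume "Z \<in> {Zset D \<sigma> U m n V | U m n V. open U \<and> open V}"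
      then obtain U m n V where "Z = Zset D \<sigma> U m n V" "open U" "open V" by blast
      then show "openin (top_of_set E) ((\<lambda>x. (x, int q, x)) -` Z \<inter> topspace (top_of_set E))"
        using loop_vimage_Zset[OF E \<open>q > 0\<close>, where U=U and m=m and n=n and V=V]
        by (simp add: Int_assoc openin_open_Int open_Int)
    next
      show "(\<lambda>x. (x, int q, x)) ` topspace (top_of_set E) \<subseteq> \<Union>{Zset D \<sigma> U m n V | U m n V. open U \<and> open V}"
        using loop topspace_DRG_top unfolding DRG_top_def by auto
    qed
  qed
  moreover have "compactin (top_of_set E) E" using assms(1) by (simp add: compactin_subtopology)
  ultimately show ?thesis by (rule image_compactin[rotated])
qed

lemma compact_loops_near:
  assumes lc: "locally_compact_space (euclidean :: 'a topology)"
    and per: "periodic_pt D \<sigma> x0" and "period x0 dvd q" "q > 0"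
  obtains U K where "open U" "x0 \<in> U" "compactin iso_top K"
    "\<And>x. x \<in> U \<Longrightarrow> iter (preperiod x0 + q) x = iter (preperiod x0) x \<Longrightarrow> (x, int q, x) \<in> K"
    "\<And>h. h \<in> K \<Longrightarrow> \<exists>x. h = (x, int q, x)"
proof -
  define l where "l = preperiod x0"
  have cyc: "x0 \<in> Dom l" "cyclic (iter l x0)" using preperiod_cyclic[OF per] unfolding l_def by auto
  have x0q: "x0 \<in> Dom (l + q)" using cyc cyclic_Dom Dom_add by blast
  have "iter (period x0) (iter l x0) = iter l x0"
    using period_cycle_from[OF per cyc] by (simp add: iter_add add.commute)
  then have "iter q (iter l x0) = iter l x0"
    using iter_mod_cycle[OF _ period_pos[OF per], of "iter l x0" q] assms(3) by simp
  then have ret: "iter (l + q) x0 = iter l x0" "l + q \<noteq> l"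
    using \<open>q > 0\<close> by (simp_all add: iter_add add.commute)
  obtain G where G: "open G" "x0 \<in> G"
    "\<And>x. x \<in> G \<Longrightarrow> x \<in> Dom (l + q) \<Longrightarrow> x \<in> Dom l \<Longrightarrow> iter (l + q) x = iter l x \<Longrightarrow>
       per_l D \<sigma> x = per_l D \<sigma> x0"
    using per_l_locally_constant[OF x0q cyc(1) ret] by blast
  have "open (G \<inter> Dom (l + q))" "x0 \<in> G \<inter> Dom (l + q)" using G(1,2) x0q open_Dom by auto
  then obtain U W where UW: "open U" "compact W" "x0 \<in> U" "U \<subseteq> W" "W \<subseteq> G \<inter> Dom (l + q)"
    by (rule locally_compact_compact_nhd[OF lc]) blast
  define E where "E = {x \<in> W. iter (l + q) x = iter l x}"
  have "E = W \<inter> - {x \<in> Dom (l + q) \<inter> Dom l. iter (l + q) x \<noteq> iter l x}"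
    unfolding E_def using UW(5) Dom_antimono[of l "l + q"] by auto
  then have "compact E" using UW(2) open_iter_neq by (simp add: compact_Int_closed closed_Compl)
  moreover have "x \<in> Dom (l + q) \<and> iter (l + q) x = iter l x \<and> preperiod x = l" if "x \<in> E" for x
  proof -
    have x: "x \<in> Dom (l + q)" "iter (l + q) x = iter l x" "x \<in> G"
      using that UW(5) unfolding E_def by auto
    have "periodic_pt D \<sigma> x" using cyclic_iter_if_return[OF x(1,2) \<open>q > 0\<close>] by blast
    moreover have "per_l D \<sigma> x = per_l D \<sigma> x0"
      using G(3)[OF x(3,1) _ x(2)] Dom_antimono[of l "l + q" x] x(1) by simp
    ultimately show ?thesis using x per_l_eq per unfolding l_def by simp
  qed
  ultimately have "compactin iso_top ((\<lambda>x. (x, int q, x)) ` E)"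
    using compactin_loops \<open>q > 0\<close> by blast
  then show ?thesis
    by (rule that[OF UW(1,3)]) (use UW(4) in \<open>auto simp: E_def l_def\<close>)
qed


definition qmap_image :: "('a \<times> complex) set \<Rightarrow> ('a \<times> ('a gel \<Rightarrow> complex)) set" where
  "qmap_image Y = (\<lambda>(x, z). qmap D \<sigma> x z) ` Y"

context
  fixes Y :: "('a \<times> complex) set"
  assumes Y_sub: "Y \<subseteq> UNIV \<times> circle" and admissible_Y: "admissible Y"
begin

lemma mem_fiber_iff: "z \<in> fiber Y x \<longleftrightarrow> (x, z) \<in> Y"
  using Y_sub by (auto simp: fiber_def)

lemma closed_Y:
  obtains Y' where "closed Y'" "Y = (UNIV \<times> circle) \<inter> Y'"
  using admissible_Y unfolding admissible_def closedin_closed by metis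

lemma proper_fiber:
  assumes "fiber Y x \<noteq> {}" "fiber Y x \<noteq> circle"
  shows "periodic_pt D \<sigma> x"
    and "(\<lambda>z. cis (2 * pi / real (period x)) * z) ` fiber Y x \<subseteq> fiber Y x"
    and "\<exists>V. open V \<and> x \<in> V \<and> (\<forall>x'\<in>V. per_l D \<sigma> x' \<noteq> per_l D \<sigma> x \<longrightarrow> fiber Y x' = {})"
proof -
  note iii = admissible_Y[unfolded admissible_def, THEN conjunct2, THEN conjunct2, rule_format, OF conjI[OF assms]]
  show per: "periodic_pt D \<sigma> x" using iii by blast
  show "(\<lambda>z. cis (2 * pi / real (period x)) * z) ` fiber Y x \<subseteq> fiber Y x"
    using iii per_p_eq[OF per] by simp
  show "\<exists>V. open V \<and> x \<in> V \<and> (\<forall>x'\<in>V. per_l D \<sigma> x' \<noteq> per_l D \<sigma> x \<longrightarrow> fiber Y x' = {})"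
    using iii by blast
qed

lemma fiber_gap_near:
  assumes "w \<in> circle" "w \<notin> fiber Y x0"
  obtains A \<epsilon> where "open A" "x0 \<in> A" "\<epsilon> > 0" "\<And>x z. x \<in> A \<Longrightarrow> dist w z \<le> \<epsilon> \<Longrightarrow> z \<notin> fiber Y x"
proof -
  obtain Y' where Y': "closed Y'" "Y = (UNIV \<times> circle) \<inter> Y'" using closed_Y by blast
  have "(x0, w) \<in> - Y'" using assms Y'(2) mem_fiber_iff by blast
  then obtain A B where AB: "open A" "open B" "(x0, w) \<in> A \<times> B" "A \<times> B \<subseteq> - Y'"
    using open_prod_elim[OF open_Compl[OF Y'(1)]] by metis
  obtain \<epsilon> where \<epsilon>: "\<epsilon> > 0" "cball w \<epsilon> \<subseteq> B" using AB(2,3) open_contains_cball by blast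
  show ?thesis
  proof (rule that[OF AB(1) _ \<epsilon>(1)])
    show "x0 \<in> A" using AB(3) by simp
    fix x z assume "x \<in> A" "dist w z \<le> \<epsilon>"
    then have "(x, z) \<in> A \<times> B" using \<epsilon>(2) by auto
    then show "z \<notin> fiber Y x" using AB(4) Y'(2) mem_fiber_iff by blast
  qed
qed

text \<open>A fiber invariant under rotation by \<open>2\<pi>/p\<close> meets every arc of length \<open>2\<pi>/p\<close>, so fibers
  missing an \<open>\<epsilon>\<close>-arc have periods below \<open>2\<pi>/\<epsilon>\<close>.\<close>
lemma period_bounded_near_gap:
  assumes w: "w \<in> circle" and \<epsilon>: "\<epsilon> > 0" "2 * pi / \<epsilon> < real N"
    and gap: "\<And>z. dist w z \<le> \<epsilon> \<Longrightarrow> z \<notin> fiber Y x"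
    and ne: "fiber Y x \<noteq> {}"
  shows "fiber Y x \<noteq> circle" "period x \<le> N"
proof -
  show nc: "fiber Y x \<noteq> circle" using gap[of w] w \<epsilon>(1) by auto
  have per: "periodic_pt D \<sigma> x" by (rule proper_fiber(1)[OF ne nc])
  show "period x \<le> N"
  proof (rule ccontr)
    assume "\<not> period x \<le> N"
    then have "2 * pi / \<epsilon> < real (period x)" using \<epsilon>(2) by linarith
    then have "2 * pi / real (period x) < \<epsilon>"
      using \<epsilon>(1) period_pos[OF per] by (simp add: field_simps)
    moreover obtain u where u: "u \<in> fiber Y x" using ne by blast
    then obtain j where "norm (cis (2 * pi / real (period x)) ^ j * u - w) \<le> 2 * pi / real (period x)"
      using exists_rotation_near[OF _ w period_pos[OF per]] unfolding fiber_def by blast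
    ultimately have "dist w (cis (2 * pi / real (period x)) ^ j * u) \<le> \<epsilon>"
      by (simp add: dist_norm norm_minus_commute)
    moreover have "cis (2 * pi / real (period x)) ^ j * u \<in> fiber Y x"
      by (rule power_mult_mem[OF proper_fiber(2)[OF ne nc] u])
    ultimately show False using gap by blast
  qed
qed

lemma qmap_nhd_disjoint_empty_fiber:
  assumes "fiber Y x0 = {}" "p \<in> Stab_dual D \<sigma>" "fst p = x0"
  obtains T where "openin (Stab_top D \<sigma>) T" "p \<in> T" "\<And>x z. (x, z) \<in> Y \<Longrightarrow> qmap D \<sigma> x z \<notin> T"
proof -
  obtain Y' where Y': "closed Y'" "Y = (UNIV \<times> circle) \<inter> Y'" using closed_Y by blast
  have "{x0} \<times> circle \<subseteq> - Y'"
  proof clarify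
    fix z assume "z \<in> circle" "(x0, z) \<in> Y'"
    then have "(x0, z) \<in> Y" using Y'(2) by blast
    then show False using assms(1) mem_fiber_iff by blast
  qed
  then have "\<exists>X0. x0 \<in> X0 \<and> open X0 \<and> X0 \<times> circle \<subseteq> - Y'"
    by (rule Elementary_Topology.tube_lemma[OF compact_sphere open_Compl[OF Y'(1)]])
  then obtain X0 where X0: "open X0" "x0 \<in> X0" "X0 \<times> circle \<subseteq> - Y'" by blast
  show ?thesis
  proof (rule that[of "Oset D \<sigma> X0 {} circle"])
    show "openin (Stab_top D \<sigma>) (Oset D \<sigma> X0 {} circle)"
      by (rule openin_Stab_basis[OF Oset_empty_in_Stab_basis[OF X0(1)]])
    show "p \<in> Oset D \<sigma> X0 {} circle" using assms(2,3) X0(2) by (simp add: Oset_mem)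
    fix x z assume "(x, z) \<in> Y"
    then have "(x, z) \<in> Y'" "z \<in> circle" using Y'(2) by auto
    then have "x \<notin> X0" using X0(3) by blast
    then show "qmap D \<sigma> x z \<notin> Oset D \<sigma> X0 {} circle" by (simp add: Oset_mem fst_qmap)
  qed
qed

text \<open>The loops of degree \<open>q\<close> near \<open>x0\<close> form a compact set \<open>K\<close>, on which \<open>q(x, z)\<close> takes the
  value \<open>z\<^sup>q\<close>; the basic open set \<open>O(U, K, V)\<close> with \<open>V\<close> from \<open>circle_power_nhd\<close> does the job.\<close>
lemma loop_Oset_near:
  assumes lc: "locally_compact_space (euclidean :: 'a topology)"
    and per0: "periodic_pt D \<sigma> x0" and q: "period x0 dvd q" "q > 0"
    and w: "w \<in> circle" and "\<epsilon> > 0"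
  obtains B U where "B \<in> Stab_basis" "open U" "x0 \<in> U" "qmap D \<sigma> x0 w \<in> B"
    "\<And>x z. x \<in> U \<Longrightarrow> z \<in> circle \<Longrightarrow> iter (preperiod x0 + q) x = iter (preperiod x0) x \<Longrightarrow>
       qmap D \<sigma> x z \<in> B \<Longrightarrow> \<exists>j::nat. dist (cis (2 * pi / real q) ^ j * z) w < \<epsilon>"
proof -
  obtain U K where U: "open U" "x0 \<in> U" and K: "compactin iso_top K"
    and K_loops: "\<And>x. x \<in> U \<Longrightarrow> iter (preperiod x0 + q) x = iter (preperiod x0) x \<Longrightarrow> (x, int q, x) \<in> K"
    and K_deg: "\<And>h. h \<in> K \<Longrightarrow> \<exists>x. h = (x, int q, x)"
    using compact_loops_near[OF lc per0 q] by blast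
  obtain V where V: "openin (top_of_set circle) V" "w ^ q \<in> V"
    and V_rot: "\<And>z. z \<in> circle \<Longrightarrow> z ^ q \<in> V \<Longrightarrow> \<exists>j::nat. dist (cis (2 * pi / real q) ^ j * z) w < \<epsilon>"
    using circle_power_nhd[OF w \<open>\<epsilon> > 0\<close> q(2)] by blast
  show ?thesis
  proof (rule that[OF Oset_in_Stab_basis[OF U(1) K V(1)] U])
    have "w powi deg h \<in> V" if h: "h \<in> K" "gr h = x0" for h
    proof -
      obtain x where "h = (x, int q, x)" using K_deg[OF h(1)] by blast
      then show ?thesis using h(2) V(2) by (simp add: gr_def)
    qed
    then show "qmap D \<sigma> x0 w \<in> Oset D \<sigma> U K V" using qmap_in_Oset_iff[OF w K] U(2) by blast
  next
    fix x z assume x: "x \<in> U" "z \<in> circle" "iter (preperiod x0 + q) x = iter (preperiod x0) x"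
      and "qmap D \<sigma> x z \<in> Oset D \<sigma> U K V"
    then have "\<forall>h\<in>K. gr h = x \<longrightarrow> z powi deg h \<in> V" using qmap_in_Oset_iff[OF x(2) K] by blast
    then have "z powi int q \<in> V" using K_loops[OF x(1,3)] by (force simp: gr_def)
    then show "\<exists>j::nat. dist (cis (2 * pi / real q) ^ j * z) w < \<epsilon>" using V_rot[OF x(2)] by simp
  qed
qed

lemma period_multiple_near:
  assumes per0: "periodic_pt D \<sigma> x0" and w: "w \<in> circle" and \<epsilon>: "\<epsilon> > 0" "2 * pi / \<epsilon> < real N"
    and gap: "\<And>u. dist w u \<le> \<epsilon> \<Longrightarrow> u \<notin> fiber Y x"
    and same: "per_l D \<sigma> x = per_l D \<sigma> x0"
    and short: "\<And>q. 1 \<le> q \<Longrightarrow> q \<le> N \<Longrightarrow> \<not> period x0 dvd q \<Longrightarrow>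
       iter (preperiod x0 + q) x \<noteq> iter (preperiod x0) x"
    and ne: "fiber Y x \<noteq> {}"
  shows "fiber Y x \<noteq> circle" "1 \<le> period x" "period x \<le> N" "period x0 dvd period x"
    "iter (preperiod x0 + period x) x = iter (preperiod x0) x"
proof -
  show nc: "fiber Y x \<noteq> circle" and PN: "period x \<le> N"
    using period_bounded_near_gap[OF w \<epsilon> gap ne] by auto
  have per: "periodic_pt D \<sigma> x" using proper_fiber(1)[OF ne nc] .
  then show P1: "1 \<le> period x" using period_pos by (simp add: Suc_le_eq)
  have "preperiod x = preperiod x0" using same per_l_eq per per0 by simp
  then show ret: "iter (preperiod x0 + period x) x = iter (preperiod x0) x"
    using period_cycle_from(2)[OF per preperiod_cyclic[OF per]] by (simp add: add.commute)
  show "period x0 dvd period x" using short[OF P1 PN] ret by blast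
qed

lemma loops_nhd_near:
  assumes lc: "locally_compact_space (euclidean :: 'a topology)"
    and per0: "periodic_pt D \<sigma> x0" and w: "w \<in> circle" and "\<epsilon> > 0"
  obtains T U where "openin (Stab_top D \<sigma>) T" "open U" "x0 \<in> U" "qmap D \<sigma> x0 w \<in> T"
    "\<And>x z q. x \<in> U \<Longrightarrow> z \<in> circle \<Longrightarrow> 1 \<le> q \<Longrightarrow> q \<le> N \<Longrightarrow> period x0 dvd q \<Longrightarrow>
       iter (preperiod x0 + q) x = iter (preperiod x0) x \<Longrightarrow> qmap D \<sigma> x z \<in> T \<Longrightarrow>
       \<exists>j::nat. dist (cis (2 * pi / real q) ^ j * z) w < \<epsilon>"
proof -
  define Q where "Q = {q. 1 \<le> q \<and> q \<le> N \<and> period x0 dvd q}"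
  have "finite Q" unfolding Q_def by (rule finite_subset[of _ "{..N}"]) auto
  have "\<exists>BU. fst BU \<in> Stab_basis \<and> open (snd BU) \<and> x0 \<in> snd BU \<and> qmap D \<sigma> x0 w \<in> fst BU \<and>
      (\<forall>x z. x \<in> snd BU \<longrightarrow> z \<in> circle \<longrightarrow> iter (preperiod x0 + q) x = iter (preperiod x0) x \<longrightarrow>
         qmap D \<sigma> x z \<in> fst BU \<longrightarrow> (\<exists>j::nat. dist (cis (2 * pi / real q) ^ j * z) w < \<epsilon>))"
    if "q \<in> Q" for q
  proof -
    have "period x0 dvd q" "q > 0" using that unfolding Q_def by auto
    from loop_Oset_near[OF lc per0 this w \<open>\<epsilon> > 0\<close>] show ?thesis by (metis fst_conv snd_conv)
  qed
  then obtain BU where BU: "\<And>q. q \<in> Q \<Longrightarrow> fst (BU q) \<in> Stab_basis \<and> open (snd (BU q)) \<and>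
      x0 \<in> snd (BU q) \<and> qmap D \<sigma> x0 w \<in> fst (BU q) \<and>
      (\<forall>x z. x \<in> snd (BU q) \<longrightarrow> z \<in> circle \<longrightarrow> iter (preperiod x0 + q) x = iter (preperiod x0) x \<longrightarrow>
         qmap D \<sigma> x z \<in> fst (BU q) \<longrightarrow> (\<exists>j::nat. dist (cis (2 * pi / real q) ^ j * z) w < \<epsilon>))"
    by metis
  show ?thesis
  proof (rule that[of "\<Inter>(insert (Stab_dual D \<sigma>) (fst ` BU ` Q))" "\<Inter>q\<in>Q. snd (BU q)"])
    show "openin (Stab_top D \<sigma>) (\<Inter>(insert (Stab_dual D \<sigma>) (fst ` BU ` Q)))"
      using \<open>finite Q\<close> BU openin_topspace[of "Stab_top D \<sigma>"] unfolding topspace_Stab_top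
      by (intro openin_Inter) (auto intro: openin_Stab_basis)
    show "open (\<Inter>q\<in>Q. snd (BU q))" using \<open>finite Q\<close> BU by (intro open_INT) auto
    show "x0 \<in> (\<Inter>q\<in>Q. snd (BU q))" using BU by auto
    show "qmap D \<sigma> x0 w \<in> \<Inter>(insert (Stab_dual D \<sigma>) (fst ` BU ` Q))"
      using BU qmap_in_Stab_dual[OF w] by auto
  next
    fix x z q assume "x \<in> (\<Inter>q\<in>Q. snd (BU q))" "z \<in> circle" "1 \<le> q" "q \<le> N" "period x0 dvd q"
      "iter (preperiod x0 + q) x = iter (preperiod x0) x"
      "qmap D \<sigma> x z \<in> \<Inter>(insert (Stab_dual D \<sigma>) (fst ` BU ` Q))"
    moreover from this have "q \<in> Q" unfolding Q_def by blast
    ultimately show "\<exists>j::nat. dist (cis (2 * pi / real q) ^ j * z) w < \<epsilon>" using BU by blast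
  qed
qed

lemma qmap_nhd_disjoint_proper_fiber:
  assumes lc: "locally_compact_space (euclidean :: 'a topology)"
    and ne: "fiber Y x0 \<noteq> {}" and w: "w \<in> circle" "w \<notin> fiber Y x0"
  obtains T where "openin (Stab_top D \<sigma>) T" "qmap D \<sigma> x0 w \<in> T"
    "\<And>x z. (x, z) \<in> Y \<Longrightarrow> qmap D \<sigma> x z \<notin> T"
proof -
  have per0: "periodic_pt D \<sigma> x0" using proper_fiber(1)[OF ne] w by blast
  obtain V0 where V0: "open V0" "x0 \<in> V0" "\<And>x. x \<in> V0 \<Longrightarrow> per_l D \<sigma> x \<noteq> per_l D \<sigma> x0 \<Longrightarrow> fiber Y x = {}"
    using proper_fiber(3)[OF ne] w by blast
  obtain A \<epsilon> where A: "open A" "x0 \<in> A" "\<epsilon> > 0" "\<And>x u. x \<in> A \<Longrightarrow> dist w u \<le> \<epsilon> \<Longrightarrow> u \<notin> fiber Y x"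
    using fiber_gap_near[OF w] by blast
  obtain N :: nat where N: "2 * pi / \<epsilon> < real N" using reals_Archimedean2 by blast
  obtain U1 where U1: "open U1" "x0 \<in> U1"
    "\<And>x q. x \<in> U1 \<Longrightarrow> 1 \<le> q \<Longrightarrow> q \<le> N \<Longrightarrow> \<not> period x0 dvd q \<Longrightarrow>
       iter (preperiod x0 + q) x \<noteq> iter (preperiod x0) x"
    using nhd_avoiding_short_returns[OF per0] by blast
  obtain T2 U2 where T2: "openin (Stab_top D \<sigma>) T2" "open U2" "x0 \<in> U2" "qmap D \<sigma> x0 w \<in> T2"
    "\<And>x z q. x \<in> U2 \<Longrightarrow> z \<in> circle \<Longrightarrow> 1 \<le> q \<Longrightarrow> q \<le> N \<Longrightarrow> period x0 dvd q \<Longrightarrow>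
       iter (preperiod x0 + q) x = iter (preperiod x0) x \<Longrightarrow> qmap D \<sigma> x z \<in> T2 \<Longrightarrow>
       \<exists>j::nat. dist (cis (2 * pi / real q) ^ j * z) w < \<epsilon>"
    using loops_nhd_near[OF lc per0 w(1) A(3)] by blast
  define U where "U = V0 \<inter> A \<inter> U1 \<inter> U2"
  show ?thesis
  proof (rule that[of "Oset D \<sigma> U {} circle \<inter> T2"])
    show "openin (Stab_top D \<sigma>) (Oset D \<sigma> U {} circle \<inter> T2)" unfolding U_def
      using V0(1) A(1) U1(1) T2(1,2)
      by (intro openin_Int[OF openin_Stab_basis[OF Oset_empty_in_Stab_basis]]) auto
    show "qmap D \<sigma> x0 w \<in> Oset D \<sigma> U {} circle \<inter> T2"
      using qmap_in_Oset_iff[OF w(1), of "{}"] V0(2) A(2) U1(2) T2(3,4) unfolding U_def by auto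
  next
    fix x z assume xz: "(x, z) \<in> Y"
    show "qmap D \<sigma> x z \<notin> Oset D \<sigma> U {} circle \<inter> T2"
    proof
      assume qT: "qmap D \<sigma> x z \<in> Oset D \<sigma> U {} circle \<inter> T2"
      have z: "z \<in> fiber Y x" "z \<in> circle" using xz mem_fiber_iff Y_sub by auto
      have x: "x \<in> V0" "x \<in> A" "x \<in> U1" "x \<in> U2"
        using qT z(2) unfolding U_def by (simp_all add: qmap_in_Oset_iff)
      then have gap: "\<And>u. dist w u \<le> \<epsilon> \<Longrightarrow> u \<notin> fiber Y x" using A(4) by blast
      have ne: "fiber Y x \<noteq> {}" using z by blast
      have same: "per_l D \<sigma> x = per_l D \<sigma> x0" using V0(3) x(1) ne by blast
      note near = period_multiple_near[OF per0 w(1) A(3) N gap same U1(3)[OF x(3)] ne]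
      obtain j :: nat where "dist (cis (2 * pi / real (period x)) ^ j * z) w < \<epsilon>"
        using T2(5)[OF x(4) z(2) near(2-5)] qT by blast
      moreover have "cis (2 * pi / real (period x)) ^ j * z \<in> fiber Y x"
        using power_mult_mem[OF proper_fiber(2)[OF ne near(1)] z(1)] .
      ultimately show False using gap by (simp add: dist_commute)
    qed
  qed
qed

lemma qmap_image_mem_iff:
  assumes "z \<in> circle"
  shows "qmap D \<sigma> x z \<in> qmap_image Y \<longleftrightarrow> (x, z) \<in> Y"
proof
  assume "qmap D \<sigma> x z \<in> qmap_image Y"
  then obtain z' where z': "(x, z') \<in> Y" "qmap D \<sigma> x z = qmap D \<sigma> x z'"
    unfolding qmap_image_def by (auto simp: qmap_def)
  then have z'F: "z' \<in> fiber Y x" "z' \<in> circle" using mem_fiber_iff Y_sub by auto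
  show "(x, z) \<in> Y"
  proof (cases "fiber Y x = circle")
    case True
    then show ?thesis using assms mem_fiber_iff by blast
  next
    case nc: False
    have ne: "fiber Y x \<noteq> {}" using z'F by blast
    note per = proper_fiber(1)[OF ne nc]
    obtain j where "z = cis (2 * pi / real (period x)) ^ j * z'"
      using power_eq_imp_rotation[OF assms z'F(2) period_pos[OF per]] z'(2) qmap_eq_iff[OF per] by blast
    then show ?thesis using power_mult_mem[OF proper_fiber(2)[OF ne nc] z'F(1)] mem_fiber_iff by simp
  qed
qed (auto simp: qmap_image_def)

lemma qmap_vimage_qmap_image: "qmap_vimage (qmap_image Y) = Y"
  using qmap_image_mem_iff Y_sub by (auto simp: qmap_vimage_def)

lemma invariant_qmap_image: "invariant D \<sigma> (qmap_image Y)"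
  unfolding invariant_def
proof (intro ballI allI impI)
  fix g ch assume g: "g \<in> DRG D \<sigma>" and gch: "(gs g, ch) \<in> qmap_image Y"
  obtain a k b where gab: "g = (a, k, b)" by (cases g)
  obtain z where z: "(b, z) \<in> Y" "ch = snd (qmap D \<sigma> b z)"
    using gch unfolding qmap_image_def gab gs_def by (auto simp: qmap_def)
  have "fiber Y a = fiber Y b"
    using fiber_eq_if_DRG[of "fiber Y"] admissible_Y g unfolding gab admissible_def by blast
  then have "(a, z) \<in> Y" using z(1) mem_fiber_iff by blast
  then show "act D \<sigma> g (gs g, ch) \<in> qmap_image Y"
    using act_qmap g z(2) unfolding gab gs_def qmap_image_def by force
qed

lemma closedin_qmap_image:
  assumes lc: "locally_compact_space (euclidean :: 'a topology)"
  shows "closedin (Stab_top D \<sigma>) (qmap_image Y)"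
proof -
  have sub: "qmap_image Y \<subseteq> Stab_dual D \<sigma>"
    using Y_sub qmap_in_Stab_dual unfolding qmap_image_def by auto
  have "\<exists>T. openin (Stab_top D \<sigma>) T \<and> p \<in> T \<and> T \<subseteq> Stab_dual D \<sigma> - qmap_image Y"
    if p: "p \<in> Stab_dual D \<sigma> - qmap_image Y" for p
  proof -
    obtain x0 ch where p_eq: "p = (x0, ch)" by (cases p)
    then have "is_char D \<sigma> x0 ch" using p by (simp add: Stab_dual_def)
    then obtain w where w: "w \<in> circle" "ch = snd (qmap D \<sigma> x0 w)" by (rule is_char_eq_qmap)
    then have pw: "p = qmap D \<sigma> x0 w" using p_eq by (simp add: qmap_def)
    then have wF: "w \<notin> fiber Y x0" using p w(1) qmap_image_mem_iff mem_fiber_iff by blast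
    have "\<exists>T. openin (Stab_top D \<sigma>) T \<and> p \<in> T \<and> (\<forall>x z. (x, z) \<in> Y \<longrightarrow> qmap D \<sigma> x z \<notin> T)"
    proof (cases "fiber Y x0 = {}")
      case True
      have "p \<in> Stab_dual D \<sigma>" "fst p = x0" using p p_eq by auto
      show ?thesis by (rule qmap_nhd_disjoint_empty_fiber[OF True \<open>p \<in> Stab_dual D \<sigma>\<close> \<open>fst p = x0\<close>]) blast
    next
      case False
      show ?thesis unfolding pw by (rule qmap_nhd_disjoint_proper_fiber[OF lc False w(1) wF]) blast
    qed
    then obtain T where T: "openin (Stab_top D \<sigma>) T" "p \<in> T" "\<And>x z. (x, z) \<in> Y \<Longrightarrow> qmap D \<sigma> x z \<notin> T"
      by blast
    then have "T \<subseteq> Stab_dual D \<sigma> - qmap_image Y"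
      using openin_subset[OF T(1)] topspace_Stab_top unfolding qmap_image_def by auto
    then show ?thesis using T by blast
  qed
  then have "openin (Stab_top D \<sigma>) (Stab_dual D \<sigma> - qmap_image Y)"
    by (subst openin_subopen) blast
  then show ?thesis using sub unfolding closedin_def topspace_Stab_top by blast
qed

end

end

theorem theorem3p14:
  fixes \<sigma> :: "'a::t2_space \<Rightarrow> 'a" and D :: "'a set" and Y :: "('a \<times> complex) set"
  assumes "locally_compact_space (euclidean :: 'a topology)"
    and "open D" and "open (\<sigma> ` D)" and "local_homeo D \<sigma>"
    and "Y \<subseteq> UNIV \<times> circle"
  shows "(\<exists>C. closedin (Stab_top D \<sigma>) C \<and> invariant D \<sigma> C \<and>
              Y = {(x, z) \<in> UNIV \<times> circle. qmap D \<sigma> x z \<in> C})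
     \<longleftrightarrow> (closedin (top_of_set (UNIV \<times> circle)) Y \<and>
          (\<forall>x\<in>D. fiber Y x = fiber Y (\<sigma> x)) \<and>
          (\<forall>x0. fiber Y x0 \<noteq> {} \<and> fiber Y x0 \<noteq> circle \<longrightarrow>
              periodic_pt D \<sigma> x0 \<and>
              (\<lambda>z. cis (2 * pi / real (the_enat (per_p D \<sigma> x0))) * z) ` fiber Y x0 = fiber Y x0 \<and>
              (\<exists>V. open V \<and> x0 \<in> V \<and>
                 (\<forall>x\<in>V. per_l D \<sigma> x \<noteq> per_l D \<sigma> x0 \<longrightarrow> fiber Y x = {}))))"
proof -
  interpret deaconu_renault D \<sigma> using assms(2,4) by unfold_locales
  have "(\<exists>C. closedin (Stab_top D \<sigma>) C \<and> invariant D \<sigma> C \<and> Y = qmap_vimage C) \<longleftrightarrow> admissible Y"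
  proof
    assume "\<exists>C. closedin (Stab_top D \<sigma>) C \<and> invariant D \<sigma> C \<and> Y = qmap_vimage C"
    then show "admissible Y" using admissible_qmap_vimage by blast
  next
    assume "admissible Y"
    with assms(1,5) show "\<exists>C. closedin (Stab_top D \<sigma>) C \<and> invariant D \<sigma> C \<and> Y = qmap_vimage C"
      using closedin_qmap_image invariant_qmap_image qmap_vimage_qmap_image by metis
  qed
  then show ?thesis unfolding admissible_def qmap_vimage_def .
qed
end
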